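(* A sequent $\Gamma\Rightarrow\Delta$ is derivable in $\mathsf{S.ConstCK}$ if and only if $\iota(\Gamma\Rightarrow\Delta)$ is derivable in $\mathsf{ConstCK}$.
   Context: Language $\mathcal{L}$: formulas $\varphi ::= p \mid \bot \mid \varphi\wedge\varphi \mid \varphi\vee\varphi \mid \varphi\to\varphi \mid \varphi \mathrel{\Box\!\!\to} \varphi \mid \varphi \mathrel{\Diamond\!\!\to}\varphi$; $\neg\varphi:=\varphi\to\bot$, $\top:=\neg\bot$, $\varphi\leftrightarrow\psi:=(\varphi\to\psi)\wedge(\psi\to\varphi)$. Hilbert system $\mathsf{ConstCK}$: any axiomatisation of intuitionistic propositional logic in $\mathcal{L}$ with modus ponens, plus axioms CM$_\Box$: $(\varphi\mathrel{\Box\!\!\to}\psi\wedge\chi)\to(\varphi\mathrel{\Box\!\!\to}\psi)\wedge(\varphi\mathrel{\Box\!\!\to}\chi)$; CC$_\Box$: $(\varphi\mathrel{\Box\!\!\to}\psi)\wedge(\varphi\mathrel{\Box\!\!\to}\chi)\to(\varphi\mathrel{\Box\!\!\to}\psi\wedge\chi)$; CN$_\Box$: $\varphi\mathrel{\Box\!\!\to}\top$; CN$_\Diamond$: $\neg(\varphi\mathrel{\Diamond\!\!\to}\bot)$; CK$_\Diamond$: $(\varphi\mathrel{\Box\!\!\to}(\psi\to\chi))\to((\varphi\mathrel{\Diamond\!\!\to}\psi)\to(\varphi\mathrel{\Diamond\!\!\to}\chi))$; and rules RA$_\Box$: from $\varphi\leftrightarrow\rho$ infer $(\varphi\mathrel{\Box\!\!\to}\psi)\leftrightarrow(\rho\mathrel{\Box\!\!\to}\psi)$;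 RC$_\Box$: from $\psi\leftrightarrow\chi$ infer $(\varphi\mathrel{\Box\!\!\to}\psi)\leftrightarrow(\varphi\mathrel{\Box\!\!\to}\chi)$; RA$_\Diamond$, RC$_\Diamond$: the same with $\mathrel{\Diamond\!\!\to}$. A sequent $\Gamma\Rightarrow\Delta$ is a pair of finite multisets of formulas with $|\Delta|\le1$; $\varphi\Leftrightarrow\rho$ abbreviates the two sequents $\varphi\Rightarrow\rho$, $\rho\Rightarrow\varphi$. Formula interpretation: $\iota(\Gamma\Rightarrow\Delta)=\bigwedge\Gamma\to\bigvee\Delta$ if $\Gamma\neq\emptyset$ and $\bigvee\Delta$ if $\Gamma=\emptyset$, with $\bigvee\emptyset=\bot$. Rules of $\mathsf{S.ConstCK}$ (premisses / conclusion, $0\le|\Delta|\le1$, $n\ge0$): init: $\Gamma,p\Rightarrow p$; $\bot_L$: $\Gamma,\bot\Rightarrow\Delta$; $\wedge_L$: $\Gamma,\varphi,\psi\Rightarrow\Delta$ / $\Gamma,\varphi\wedge\psi\Rightarrow\Delta$; $\wedge_R$: $\Gamma\Rightarrow\varphi$, $\Gamma\Rightarrow\psi$ / $\Gamma\Rightarrow\varphi\wedge\psi$; $\vee_L$: $\Gamma,\varphi\Rightarrow\Delta$, $\Gamma,\psi\Rightarrow\Delta$ / $\Gamma,\varphi\vee\psi\Rightarrow\Delta$; $\vee_R^1$: $\Gamma\Rightarrow\varphi$ / $\Gamma\Rightarrow\varphi\vee\psi$; $\vee_R^2$: $\Gamma\Rightarrow\psi$ / $\Gamma\Rightarrow\varphi\vee\psi$;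 $\to_R$: $\Gamma,\varphi\Rightarrow\psi$ / $\Gamma\Rightarrow\varphi\to\psi$; $\to_L$: $\Gamma,\varphi\to\psi\Rightarrow\varphi$, $\Gamma,\psi\Rightarrow\Delta$ / $\Gamma,\varphi\to\psi\Rightarrow\Delta$; $\Box$: $\{\varphi\Leftrightarrow\rho_i\}_{i\le n}$, $\sigma_1,\dots,\sigma_n\Rightarrow\psi$ / $\Gamma,\rho_1\mathrel{\Box\!\!\to}\sigma_1,\dots,\rho_n\mathrel{\Box\!\!\to}\sigma_n\Rightarrow\varphi\mathrel{\Box\!\!\to}\psi$; $\Diamond$: $\{\varphi\Leftrightarrow\rho_i\}_{i\le n}$, $\varphi\Leftrightarrow\eta$, $\sigma_1,\dots,\sigma_n,\psi\Rightarrow\vartheta$ / $\Gamma,\rho_1\mathrel{\Box\!\!\to}\sigma_1,\dots,\rho_n\mathrel{\Box\!\!\to}\sigma_n,\varphi\mathrel{\Diamond\!\!\to}\psi\Rightarrow\eta\mathrel{\Diamond\!\!\to}\vartheta$; $\Box\Diamond$: $\{\varphi\Leftrightarrow\rho_i\}_{i\le n}$, $\sigma_1,\dots,\sigma_n,\psi\Rightarrow$ / $\Gamma,\rho_1\mathrel{\Box\!\!\to}\sigma_1,\dots,\rho_n\mathrel{\Box\!\!\to}\sigma_n,\varphi\mathrel{\Diamond\!\!\to}\psi\Rightarrow\Delta$. *)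

theory Defs
  imports "HOL-Library.Multiset"
begin

datatype 'a fm =
    Atom 'a
  | Bot
  | And "'a fm" "'a fm"
  | Or "'a fm" "'a fm"
  | Imp "'a fm" "'a fm"
  | BoxArr "'a fm" "'a fm"
  | DiaArr "'a fm" "'a fm"

definition Neg :: "'a fm \<Rightarrow> 'a fm" where "Neg \<phi> = Imp \<phi> Bot"
definition Top :: "'a fm" where "Top = Neg Bot"
definition Iff :: "'a fm \<Rightarrow> 'a fm \<Rightarrow> 'a fm" where
  "Iff \<phi> \<psi> = And (Imp \<phi> \<psi>) (Imp \<psi> \<phi>)"

inductive ConstCK :: "'a fm \<Rightarrow> bool" where
  A1: "ConstCK (Imp \<phi> (Imp \<psi> \<phi>))"
| A2: "ConstCK (Imp (Imp \<phi> (Imp \<psi> \<chi>)) (Imp (Imp \<phi> \<psi>) (Imp \<phi> \<chi>)))"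
| A3: "ConstCK (Imp (And \<phi> \<psi>) \<phi>)"
| A4: "ConstCK (Imp (And \<phi> \<psi>) \<psi>)"
| A5: "ConstCK (Imp \<phi> (Imp \<psi> (And \<phi> \<psi>)))"
| A6: "ConstCK (Imp \<phi> (Or \<phi> \<psi>))"
| A7: "ConstCK (Imp \<psi> (Or \<phi> \<psi>))"
| A8: "ConstCK (Imp (Imp \<phi> \<chi>) (Imp (Imp \<psi> \<chi>) (Imp (Or \<phi> \<psi>) \<chi>)))"
| A9: "ConstCK (Imp Bot \<phi>)"
| MP: "ConstCK (Imp \<phi> \<psi>) \<Longrightarrow> ConstCK \<phi> \<Longrightarrow> ConstCK \<psi>"
| CM_box: "ConstCK (Imp (BoxArr \<phi> (And \<psi> \<chi>)) (And (BoxArr \<phi> \<psi>) (BoxArr \<phi> \<chi>)))"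
| CC_box: "ConstCK (Imp (And (BoxArr \<phi> \<psi>) (BoxArr \<phi> \<chi>)) (BoxArr \<phi> (And \<psi> \<chi>)))"
| CN_box: "ConstCK (BoxArr \<phi> Top)"
| CN_dia: "ConstCK (Neg (DiaArr \<phi> Bot))"
| CK_dia: "ConstCK (Imp (BoxArr \<phi> (Imp \<psi> \<chi>)) (Imp (DiaArr \<phi> \<psi>) (DiaArr \<phi> \<chi>)))"
| RA_box: "ConstCK (Iff \<phi> \<rho>) \<Longrightarrow> ConstCK (Iff (BoxArr \<phi> \<psi>) (BoxArr \<rho> \<psi>))"
| RC_box: "ConstCK (Iff \<psi> \<chi>) \<Longrightarrow> ConstCK (Iff (BoxArr \<phi> \<psi>) (BoxArr \<phi> \<chi>))"
| RA_dia: "ConstCK (Iff \<phi> \<rho>) \<Longrightarrow> ConstCK (Iff (DiaArr \<phi> \<psi>) (DiaArr \<rho> \<psi>))"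
| RC_dia: "ConstCK (Iff \<psi> \<chi>) \<Longrightarrow> ConstCK (Iff (DiaArr \<phi> \<psi>) (DiaArr \<phi> \<chi>))"

text \<open>A sequent is a pair of finite multisets (antecedent,
succedent); every rule only produces sequents with succedent of size at most 1.
The n pairs (rho_i, sigma_i) of the modal rules are given as a list.\<close>
inductive SConstCK :: "'a fm multiset \<Rightarrow> 'a fm multiset \<Rightarrow> bool" where
  init: "SConstCK (add_mset (Atom p) \<Gamma>) {#Atom p#}"
| botL: "size \<Delta> \<le> 1 \<Longrightarrow> SConstCK (add_mset Bot \<Gamma>) \<Delta>"
| andL: "SConstCK (add_mset \<phi> (add_mset \<psi> \<Gamma>)) \<Delta> \<Longrightarrow> SConstCK (add_mset (And \<phi> \<psi>) \<Gamma>) \<Delta>"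
| andR: "SConstCK \<Gamma> {#\<phi>#} \<Longrightarrow> SConstCK \<Gamma> {#\<psi>#} \<Longrightarrow> SConstCK \<Gamma> {#And \<phi> \<psi>#}"
| orL: "SConstCK (add_mset \<phi> \<Gamma>) \<Delta> \<Longrightarrow> SConstCK (add_mset \<psi> \<Gamma>) \<Delta> \<Longrightarrow>
        SConstCK (add_mset (Or \<phi> \<psi>) \<Gamma>) \<Delta>"
| orR1: "SConstCK \<Gamma> {#\<phi>#} \<Longrightarrow> SConstCK \<Gamma> {#Or \<phi> \<psi>#}"
| orR2: "SConstCK \<Gamma> {#\<psi>#} \<Longrightarrow> SConstCK \<Gamma> {#Or \<phi> \<psi>#}"
| impR: "SConstCK (add_mset \<phi> \<Gamma>) {#\<psi>#} \<Longrightarrow> SConstCK \<Gamma> {#Imp \<phi> \<psi>#}"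
| impL: "SConstCK (add_mset (Imp \<phi> \<psi>) \<Gamma>) {#\<phi>#} \<Longrightarrow> SConstCK (add_mset \<psi> \<Gamma>) \<Delta> \<Longrightarrow>
        SConstCK (add_mset (Imp \<phi> \<psi>) \<Gamma>) \<Delta>"
| box: "\<forall>(\<rho>, \<sigma>) \<in> set ps. SConstCK {#\<phi>#} {#\<rho>#} \<and> SConstCK {#\<rho>#} {#\<phi>#} \<Longrightarrow>
        SConstCK (mset (map snd ps)) {#\<psi>#} \<Longrightarrow>
        SConstCK (\<Gamma> + mset (map (\<lambda>(\<rho>, \<sigma>). BoxArr \<rho> \<sigma>) ps)) {#BoxArr \<phi> \<psi>#}"
| dia: "\<forall>(\<rho>, \<sigma>) \<in> set ps. SConstCK {#\<phi>#} {#\<rho>#} \<and> SConstCK {#\<rho>#} {#\<phi>#} \<Longrightarrow>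
        SConstCK {#\<phi>#} {#\<eta>#} \<Longrightarrow> SConstCK {#\<eta>#} {#\<phi>#} \<Longrightarrow>
        SConstCK (add_mset \<psi> (mset (map snd ps))) {#\<theta>#} \<Longrightarrow>
        SConstCK (add_mset (DiaArr \<phi> \<psi>) (\<Gamma> + mset (map (\<lambda>(\<rho>, \<sigma>). BoxArr \<rho> \<sigma>) ps)))
                 {#DiaArr \<eta> \<theta>#}"
| boxdia: "\<forall>(\<rho>, \<sigma>) \<in> set ps. SConstCK {#\<phi>#} {#\<rho>#} \<and> SConstCK {#\<rho>#} {#\<phi>#} \<Longrightarrow>
        SConstCK (add_mset \<psi> (mset (map snd ps))) {#} \<Longrightarrow> size \<Delta> \<le> 1 \<Longrightarrow>
        SConstCK (add_mset (DiaArr \<phi> \<psi>) (\<Gamma> + mset (map (\<lambda>(\<rho>, \<sigma>). BoxArr \<rho> \<sigma>) ps))) \<Delta>"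

fun conj_list :: "'a fm list \<Rightarrow> 'a fm" where
  "conj_list [] = Top"
| "conj_list [\<phi>] = \<phi>"
| "conj_list (\<phi> # \<psi> # xs) = And \<phi> (conj_list (\<psi> # xs))"

fun disj_list :: "'a fm list \<Rightarrow> 'a fm" where
  "disj_list [] = Bot"
| "disj_list [\<phi>] = \<phi>"
| "disj_list (\<phi> # \<psi> # xs) = Or \<phi> (disj_list (\<psi> # xs))"

text \<open>Formula interpretation of a sequent whose antecedent is enumerated by the list xs
and whose succedent is enumerated by ys.\<close>
definition iota :: "'a fm list \<Rightarrow> 'a fm list \<Rightarrow> 'a fm" where
  "iota xs ys = (if xs = [] then disj_list ys else Imp (conj_list xs) (disj_list ys))"

end

theory Submission
  imports Defs
begin

text \<open>Soundness: read as its formula interpretation, every rule of S.ConstCK is a derived rule of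
  ConstCK; the modal rules reduce to the axioms CC, CN and CK via the rule RA and monotonicity of
  the box-arrow in its consequent. Completeness: the axioms of ConstCK are derivable, the rules RA
  and RC are instances of the modal rules, and modus ponens is a cut. Cut is admissible by
  induction on the cut formula and on the derivation of the left premise, using height-preserving
  invertibility of the left rules and height-preserving contraction. An implication or a modal
  formula introduced on the right is cut by pushing the cut up the derivation of the right premise
  until the formula is principal there as well.\<close>

lemma add_mset_eq_add_mset_neqE:
  assumes "add_mset x M = add_mset y N" "x \<noteq> y"
  obtains K where "M = add_mset y K" "N = add_mset x K"
  using assms by (auto simp: add_eq_conv_ex)

lemma add_mset_eq_add_mset_twiceE:
  assumes "add_mset x M = add_mset y (add_mset y N)" "x \<noteq> y"
  obtains K where "M = add_mset y (add_mset y K)" "N = add_mset x K"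
  using assms by (auto simp: add_eq_conv_ex)

lemma subset_add_mset_notin: "M \<subseteq># add_mset x N \<Longrightarrow> x \<notin># M \<Longrightarrow> M \<subseteq># N"
  unfolding subseteq_mset_def by (metis count_add_mset count_eq_zero_iff le0)

lemma subset_add_mset_twiceE:
  assumes "M \<subseteq># add_mset x (add_mset x N)" "\<not> M \<subseteq># add_mset x N"
  obtains K where "M = add_mset x (add_mset x K)" "K \<subseteq># N"
proof -
  obtain a where "count (add_mset x N) a < count M a"
    using assms(2) by (auto simp: subseteq_mset_def not_le)
  moreover have "count M a \<le> count (add_mset x (add_mset x N)) a"
    using assms(1) by (rule mset_subset_eq_count)
  ultimately have "a = x" "2 \<le> count M x"
    by (auto split: if_splits)
  then have "M = add_mset x (add_mset x (M - {#x, x#}))"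
    by (auto simp: multiset_eq_iff)
  moreover have "M - {#x, x#} \<subseteq># N"
    using assms(1) by (simp add: subset_eq_diff_conv)
  ultimately show ?thesis by (rule that)
qed

section \<open>Derivations from hypotheses in ConstCK\<close>

inductive ConstCK_from :: "'a fm set \<Rightarrow> 'a fm \<Rightarrow> bool" for H where
  hyp: "\<phi> \<in> H \<Longrightarrow> ConstCK_from H \<phi>"
| ax: "ConstCK \<phi> \<Longrightarrow> ConstCK_from H \<phi>"
| mp: "ConstCK_from H (Imp \<phi> \<psi>) \<Longrightarrow> ConstCK_from H \<phi> \<Longrightarrow> ConstCK_from H \<psi>"

lemma ConstCK_from_trans:
  "ConstCK_from H \<phi> \<Longrightarrow> (\<And>\<psi>. \<psi> \<in> H \<Longrightarrow> ConstCK_from H' \<psi>) \<Longrightarrow> ConstCK_from H' \<phi>"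
  by (induction rule: ConstCK_from.induct) (auto intro: ConstCK_from.intros)

lemma ConstCK_from_mono: "ConstCK_from H \<phi> \<Longrightarrow> H \<subseteq> H' \<Longrightarrow> ConstCK_from H' \<phi>"
  by (erule ConstCK_from_trans) (auto intro: ConstCK_from.hyp)

lemma ConstCK_from_empty: "ConstCK_from {} \<phi> \<Longrightarrow> ConstCK \<phi>"
  by (induction rule: ConstCK_from.induct) (auto intro: ConstCK.MP)

lemma ConstCK_from_MP: "ConstCK (Imp \<phi> \<psi>) \<Longrightarrow> ConstCK_from H \<phi> \<Longrightarrow> ConstCK_from H \<psi>"
  by (rule ConstCK_from.mp[OF ConstCK_from.ax])

lemma ConstCK_from_MP2:
  "ConstCK (Imp \<phi> (Imp \<psi> \<chi>)) \<Longrightarrow> ConstCK_from H \<phi> \<Longrightarrow> ConstCK_from H \<psi> \<Longrightarrow> ConstCK_from H \<chi>"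
  by (meson ConstCK_from_MP ConstCK_from.mp)

lemma ConstCK_imp_refl: "ConstCK (Imp \<phi> \<phi>)"
  by (meson ConstCK.A1 ConstCK.A2 ConstCK.MP)

lemma ConstCK_from_deduction: "ConstCK_from (insert \<phi> H) \<psi> \<Longrightarrow> ConstCK_from H (Imp \<phi> \<psi>)"
proof (induction rule: ConstCK_from.induct)
  case (hyp \<chi>)
  then show ?case
    by (metis ConstCK.A1 ConstCK_from.hyp ConstCK_from_MP ConstCK_from.ax ConstCK_imp_refl insertE)
next
  case (ax \<chi>)
  then show ?case by (meson ConstCK.A1 ConstCK_from_MP ConstCK_from.ax)
next
  case (mp \<chi> \<theta>)
  then show ?case by (meson ConstCK.A2 ConstCK_from_MP2)
qed

lemma ConstCK_from_singletonD: "ConstCK_from {\<phi>} \<psi> \<Longrightarrow> ConstCK (Imp \<phi> \<psi>)"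
  using ConstCK_from_deduction ConstCK_from_empty by blast

lemma ConstCK_IffI: "ConstCK (Imp \<phi> \<psi>) \<Longrightarrow> ConstCK (Imp \<psi> \<phi>) \<Longrightarrow> ConstCK (Iff \<phi> \<psi>)"
  unfolding Iff_def by (meson ConstCK.A5 ConstCK.MP)

lemma ConstCK_IffD1: "ConstCK (Iff \<phi> \<psi>) \<Longrightarrow> ConstCK (Imp \<phi> \<psi>)"
  unfolding Iff_def by (meson ConstCK.A3 ConstCK.MP)

lemma ConstCK_IffD2: "ConstCK (Iff \<phi> \<psi>) \<Longrightarrow> ConstCK (Imp \<psi> \<phi>)"
  unfolding Iff_def by (meson ConstCK.A4 ConstCK.MP)

lemma ConstCK_Top: "ConstCK Top"
  unfolding Top_def Neg_def by (rule ConstCK_imp_refl)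

lemma ConstCK_box_nec: "ConstCK \<psi> \<Longrightarrow> ConstCK (BoxArr \<phi> \<psi>)"
proof -
  assume "ConstCK \<psi>"
  then have "ConstCK (Iff Top \<psi>)"
    using ConstCK_Top by (meson ConstCK.A1 ConstCK.MP ConstCK_IffI)
  then have "ConstCK (Imp (BoxArr \<phi> Top) (BoxArr \<phi> \<psi>))"
    by (rule ConstCK_IffD1[OF ConstCK.RC_box])
  then show ?thesis using ConstCK.CN_box by (rule ConstCK.MP)
qed

lemma ConstCK_box_mono: "ConstCK (Imp \<psi> \<chi>) \<Longrightarrow> ConstCK (Imp (BoxArr \<phi> \<psi>) (BoxArr \<phi> \<chi>))"
proof -
  assume "ConstCK (Imp \<psi> \<chi>)"
  then have "ConstCK_from {\<psi>} \<chi>" by (rule ConstCK_from_MP) (simp add: ConstCK_from.hyp)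
  then have "ConstCK_from {\<psi>} (And \<psi> \<chi>)"
    by (meson ConstCK_from_MP2 ConstCK.A5 ConstCK_from.hyp singletonI)
  then have "ConstCK (Iff \<psi> (And \<psi> \<chi>))"
    by (rule ConstCK_IffI[OF ConstCK_from_singletonD ConstCK.A3])
  then have "ConstCK (Imp (BoxArr \<phi> \<psi>) (BoxArr \<phi> (And \<psi> \<chi>)))"
    by (rule ConstCK_IffD1[OF ConstCK.RC_box])
  then have "ConstCK_from {BoxArr \<phi> \<psi>} (BoxArr \<phi> (And \<psi> \<chi>))"
    by (rule ConstCK_from_MP) (simp add: ConstCK_from.hyp)
  then have "ConstCK_from {BoxArr \<phi> \<psi>} (And (BoxArr \<phi> \<psi>) (BoxArr \<phi> \<chi>))"
    by (rule ConstCK_from_MP[OF ConstCK.CM_box])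
  then show ?thesis
    by (intro ConstCK_from_singletonD) (rule ConstCK_from_MP[OF ConstCK.A4])
qed

lemma ConstCK_from_box_conj_list:
  "\<forall>\<psi>\<in>set \<psi>s. ConstCK_from H (BoxArr \<phi> \<psi>) \<Longrightarrow> ConstCK_from H (BoxArr \<phi> (conj_list \<psi>s))"
proof (induction \<psi>s rule: conj_list.induct)
  case 1
  then show ?case by (simp add: ConstCK_from.ax ConstCK_box_nec ConstCK_Top)
next
  case (3 \<psi> \<chi> \<psi>s)
  then show ?case by (auto intro: ConstCK_from_MP[OF ConstCK.CC_box] ConstCK_from_MP2[OF ConstCK.A5])
qed simp

lemma ConstCK_from_conj_list_elim: "\<psi> \<in> set \<psi>s \<Longrightarrow> ConstCK_from {conj_list \<psi>s} \<psi>"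
proof (induction \<psi>s rule: conj_list.induct)
  case (3 \<chi> \<theta> \<psi>s)
  show ?case
  proof (cases "\<psi> = \<chi>")
    case True
    then show ?thesis by (auto intro: ConstCK_from_MP[OF ConstCK.A3] ConstCK_from.hyp)
  next
    case False
    with 3 have "ConstCK_from {conj_list (\<theta> # \<psi>s)} \<psi>" by auto
    then show ?thesis
      by (rule ConstCK_from_trans) (auto intro: ConstCK_from_MP[OF ConstCK.A4] ConstCK_from.hyp)
  qed
qed (auto intro: ConstCK_from.hyp)

abbreviation box_pair :: "'a fm \<times> 'a fm \<Rightarrow> 'a fm" where
  "box_pair \<equiv> \<lambda>(\<rho>, \<sigma>). BoxArr \<rho> \<sigma>"

lemma ConstCK_from_box_rule:
  assumes "\<forall>(\<rho>, \<sigma>) \<in> set ps. ConstCK_from {\<phi>} \<rho> \<and> ConstCK_from {\<rho>} \<phi>"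
    and "box_pair ` set ps \<subseteq> H" and "ConstCK_from (snd ` set ps) \<psi>"
  shows "ConstCK_from H (BoxArr \<phi> \<psi>)"
proof -
  have "ConstCK_from H (BoxArr \<phi> \<sigma>)" if "\<sigma> \<in> set (map snd ps)" for \<sigma>
  proof -
    from that obtain \<rho> where \<rho>: "(\<rho>, \<sigma>) \<in> set ps" by auto
    with assms(1) have "ConstCK (Iff \<phi> \<rho>)"
      by (blast intro: ConstCK_IffI ConstCK_from_singletonD)
    moreover from \<rho> assms(2) have "ConstCK_from H (BoxArr \<rho> \<sigma>)"
      by (auto intro: ConstCK_from.hyp)
    ultimately show ?thesis by (rule ConstCK_from_MP[OF ConstCK_IffD2[OF ConstCK.RA_box]])
  qed
  then have "ConstCK_from H (BoxArr \<phi> (conj_list (map snd ps)))"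
    by (intro ConstCK_from_box_conj_list) blast
  moreover have "ConstCK (Imp (conj_list (map snd ps)) \<psi>)"
    using assms(3) ConstCK_from_conj_list_elim[of _ "map snd ps"]
    by (intro ConstCK_from_singletonD, elim ConstCK_from_trans) simp
  ultimately show ?thesis by (rule ConstCK_from_MP[OF ConstCK_box_mono, rotated])
qed

section \<open>Soundness\<close>

definition succedent_fm :: "'a fm multiset \<Rightarrow> 'a fm" where
  "succedent_fm \<Delta> = (if \<Delta> = {#} then Bot else (SOME \<phi>. \<phi> \<in># \<Delta>))"

lemma succedent_fm_simps [simp]: "succedent_fm {#} = Bot" "succedent_fm {#\<phi>#} = \<phi>"
  by (auto simp: succedent_fm_def)

lemma SConstCK_sound: "SConstCK \<Gamma> \<Delta> \<Longrightarrow> ConstCK_from (set_mset \<Gamma>) (succedent_fm \<Delta>)"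
proof (induction rule: SConstCK.induct)
  case (botL \<Delta> \<Gamma>)
  then show ?case by (auto intro: ConstCK_from.hyp ConstCK_from_MP[OF ConstCK.A9])
next
  case (andL \<phi> \<psi> \<Gamma> \<Delta>)
  have "ConstCK_from (set_mset (add_mset (And \<phi> \<psi>) \<Gamma>)) \<chi>"
    if "\<chi> \<in> set_mset (add_mset \<phi> (add_mset \<psi> \<Gamma>))" for \<chi>
    using that by (auto intro: ConstCK_from.hyp ConstCK_from_MP[OF ConstCK.A3] ConstCK_from_MP[OF ConstCK.A4])
  with andL.IH show ?case by (rule ConstCK_from_trans)
next
  case (andR \<Gamma> \<phi> \<psi>)
  then show ?case by (auto intro: ConstCK_from_MP2[OF ConstCK.A5])
next
  case (orL \<phi> \<Gamma> \<Delta> \<psi>)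
  then have "ConstCK_from (set_mset \<Gamma>) (Imp (Or \<phi> \<psi>) (succedent_fm \<Delta>))"
    by (auto intro: ConstCK_from_MP2[OF ConstCK.A8] ConstCK_from_deduction)
  then show ?case
    by (auto intro: ConstCK_from.mp ConstCK_from.hyp elim: ConstCK_from_mono)
next
  case (orR1 \<Gamma> \<phi> \<psi>)
  then show ?case by (auto intro: ConstCK_from_MP[OF ConstCK.A6])
next
  case (orR2 \<Gamma> \<psi> \<phi>)
  then show ?case by (auto intro: ConstCK_from_MP[OF ConstCK.A7])
next
  case (impR \<phi> \<Gamma> \<psi>)
  then show ?case by (auto intro: ConstCK_from_deduction)
next
  case (impL \<phi> \<psi> \<Gamma> \<Delta>)
  have "ConstCK_from (set_mset (add_mset (Imp \<phi> \<psi>) \<Gamma>)) \<psi>"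
    using impL.IH(1) by (auto intro: ConstCK_from.mp ConstCK_from.hyp)
  with impL.IH(2) show ?case
    by (elim ConstCK_from_trans) (auto intro: ConstCK_from.hyp)
next
  case (box ps \<phi> \<psi> \<Gamma>)
  then show ?case by (auto intro: ConstCK_from_box_rule)
next
  case (dia ps \<phi> \<eta> \<psi> \<theta> \<Gamma>)
  let ?H = "set_mset (add_mset (DiaArr \<phi> \<psi>) (\<Gamma> + mset (map box_pair ps)))"
  from dia.IH have "ConstCK_from ?H (BoxArr \<phi> (Imp \<psi> \<theta>))"
    by (intro ConstCK_from_box_rule) (auto intro: ConstCK_from_deduction)
  then have "ConstCK_from ?H (DiaArr \<phi> \<theta>)"
    by (rule ConstCK_from_MP2[OF ConstCK.CK_dia]) (simp add: ConstCK_from.hyp)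
  moreover have "ConstCK (Iff \<phi> \<eta>)"
    using dia.IH(2,3) by (auto intro: ConstCK_IffI ConstCK_from_singletonD)
  ultimately show ?case by (auto intro: ConstCK_from_MP[OF ConstCK_IffD1[OF ConstCK.RA_dia]])
next
  case (boxdia ps \<phi> \<psi> \<Delta> \<Gamma>)
  let ?H = "set_mset (add_mset (DiaArr \<phi> \<psi>) (\<Gamma> + mset (map box_pair ps)))"
  from boxdia.IH have "ConstCK_from ?H (BoxArr \<phi> (Imp \<psi> Bot))"
    by (intro ConstCK_from_box_rule) (auto intro: ConstCK_from_deduction)
  then have "ConstCK_from ?H (DiaArr \<phi> Bot)"
    by (rule ConstCK_from_MP2[OF ConstCK.CK_dia]) (simp add: ConstCK_from.hyp)
  then show ?case
    by (auto intro: ConstCK_from_MP[OF ConstCK.A9] ConstCK_from_MP[OF ConstCK.CN_dia[unfolded Neg_def]])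
qed (auto intro: ConstCK_from.hyp)

lemma SConstCK_sound_iota:
  assumes "SConstCK \<Gamma> \<Delta>" "size \<Delta> \<le> 1" "mset xs = \<Gamma>" "mset ys = \<Delta>"
  shows "ConstCK (iota xs ys)"
proof -
  have "succedent_fm \<Delta> = disj_list ys"
    using assms(2,4) by (cases ys rule: disj_list.cases) auto
  then have "ConstCK_from (set xs) (disj_list ys)"
    using SConstCK_sound[OF assms(1)] assms(3) by auto
  moreover from this have "ConstCK_from {conj_list xs} (disj_list ys)"
    using ConstCK_from_conj_list_elim[of _ xs] by (rule ConstCK_from_trans)
  ultimately show ?thesis
    unfolding iota_def by (auto simp: ConstCK_from_empty intro: ConstCK_from_singletonD)
qed

definition SConstCK_equiv :: "'a fm \<Rightarrow> 'a fm \<Rightarrow> bool" where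
  "SConstCK_equiv \<phi> \<rho> \<longleftrightarrow> SConstCK {#\<phi>#} {#\<rho>#} \<and> SConstCK {#\<rho>#} {#\<phi>#}"

lemma SConstCK_box_subset:
  assumes "\<forall>(\<rho>, \<sigma>) \<in># P. SConstCK_equiv \<phi> \<rho>" "SConstCK (image_mset snd P) {#\<psi>#}"
    and "image_mset box_pair P \<subseteq># \<Gamma>"
  shows "SConstCK \<Gamma> {#BoxArr \<phi> \<psi>#}"
proof -
  obtain ps where P: "P = mset ps" by (metis ex_mset)
  obtain \<Gamma>' where \<Gamma>: "\<Gamma> = \<Gamma>' + image_mset box_pair P"
    using assms(3) by (metis mset_subset_eq_exists_conv add.commute)
  show ?thesis
    using assms(1,2) SConstCK.box[of ps \<phi> \<psi> \<Gamma>'] unfolding \<Gamma> P by (simp add: SConstCK_equiv_def)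
qed

lemma SConstCK_dia_subset:
  assumes "\<forall>(\<rho>, \<sigma>) \<in># P. SConstCK_equiv \<phi> \<rho>" "SConstCK_equiv \<phi> \<eta>"
    and "SConstCK (add_mset \<psi> (image_mset snd P)) {#\<theta>#}"
    and "add_mset (DiaArr \<phi> \<psi>) (image_mset box_pair P) \<subseteq># \<Gamma>"
  shows "SConstCK \<Gamma> {#DiaArr \<eta> \<theta>#}"
proof -
  obtain ps where P: "P = mset ps" by (metis ex_mset)
  obtain \<Gamma>' where \<Gamma>: "\<Gamma> = add_mset (DiaArr \<phi> \<psi>) (\<Gamma>' + image_mset box_pair P)"
    using assms(4) by (metis mset_subset_eq_exists_conv add.commute union_mset_add_mset_right)
  show ?thesis
    using assms(1-3) SConstCK.dia[of ps \<phi> \<eta> \<psi> \<theta> \<Gamma>'] unfolding \<Gamma> P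
    by (simp add: SConstCK_equiv_def)
qed

lemma SConstCK_boxdia_subset:
  assumes "\<forall>(\<rho>, \<sigma>) \<in># P. SConstCK_equiv \<phi> \<rho>" "SConstCK (add_mset \<psi> (image_mset snd P)) {#}"
    and "size \<Delta> \<le> 1" and "add_mset (DiaArr \<phi> \<psi>) (image_mset box_pair P) \<subseteq># \<Gamma>"
  shows "SConstCK \<Gamma> \<Delta>"
proof -
  obtain ps where P: "P = mset ps" by (metis ex_mset)
  obtain \<Gamma>' where \<Gamma>: "\<Gamma> = add_mset (DiaArr \<phi> \<psi>) (\<Gamma>' + image_mset box_pair P)"
    using assms(4) by (metis mset_subset_eq_exists_conv add.commute union_mset_add_mset_right)
  show ?thesis
    using assms(1-3) SConstCK.boxdia[of ps \<phi> \<psi> \<Delta> \<Gamma>'] unfolding \<Gamma> P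
    by (simp add: SConstCK_equiv_def)
qed

section \<open>Height-bounded derivations\<close>

fun left_inversions :: "'a fm \<Rightarrow> 'a fm multiset set" where
  "left_inversions (And \<phi> \<psi>) = {{#\<phi>, \<psi>#}}"
| "left_inversions (Or \<phi> \<psi>) = {{#\<phi>#}, {#\<psi>#}}"
| "left_inversions (Imp \<phi> \<psi>) = {{#\<psi>#}}"
| "left_inversions _ = {}"

text \<open>The left rules for conjunction, disjunction
  and implication share one shape: \<open>Z, \<Gamma> \<Rightarrow> \<Delta>\<close> follows from \<open>Y, \<Gamma> \<Rightarrow> \<Delta>\<close> for every
  \<open>Y \<in> left_inversions Z\<close>, together with \<open>Z, \<Gamma> \<Rightarrow> \<phi>\<close> when \<open>Z = \<phi> \<rightarrow> \<psi>\<close>.\<close>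
inductive SConstCK_ht :: "nat \<Rightarrow> 'a fm multiset \<Rightarrow> 'a fm multiset \<Rightarrow> bool" where
  init: "SConstCK_ht n (add_mset (Atom p) \<Gamma>) {#Atom p#}"
| botL: "size \<Delta> \<le> 1 \<Longrightarrow> SConstCK_ht n (add_mset Bot \<Gamma>) \<Delta>"
| left: "left_inversions Z \<noteq> {} \<Longrightarrow> (\<And>Y. Y \<in> left_inversions Z \<Longrightarrow> SConstCK_ht n (Y + \<Gamma>) \<Delta>) \<Longrightarrow>
    (\<And>\<phi> \<psi>. Z = Imp \<phi> \<psi> \<Longrightarrow> SConstCK_ht n (add_mset Z \<Gamma>) {#\<phi>#}) \<Longrightarrow>
    SConstCK_ht (Suc n) (add_mset Z \<Gamma>) \<Delta>"
| andR: "SConstCK_ht n \<Gamma> {#\<phi>#} \<Longrightarrow> SConstCK_ht n \<Gamma> {#\<psi>#} \<Longrightarrow> SConstCK_ht (Suc n) \<Gamma> {#And \<phi> \<psi>#}"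
| orR1: "SConstCK_ht n \<Gamma> {#\<phi>#} \<Longrightarrow> SConstCK_ht (Suc n) \<Gamma> {#Or \<phi> \<psi>#}"
| orR2: "SConstCK_ht n \<Gamma> {#\<psi>#} \<Longrightarrow> SConstCK_ht (Suc n) \<Gamma> {#Or \<phi> \<psi>#}"
| impR: "SConstCK_ht n (add_mset \<phi> \<Gamma>) {#\<psi>#} \<Longrightarrow> SConstCK_ht (Suc n) \<Gamma> {#Imp \<phi> \<psi>#}"
| box: "\<forall>(\<rho>, \<sigma>) \<in># P. SConstCK_equiv \<phi> \<rho> \<Longrightarrow> SConstCK_ht n (image_mset snd P) {#\<psi>#} \<Longrightarrow>
    image_mset box_pair P \<subseteq># \<Gamma> \<Longrightarrow> SConstCK_ht (Suc n) \<Gamma> {#BoxArr \<phi> \<psi>#}"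
| dia: "\<forall>(\<rho>, \<sigma>) \<in># P. SConstCK_equiv \<phi> \<rho> \<Longrightarrow> SConstCK_equiv \<phi> \<eta> \<Longrightarrow>
    SConstCK_ht n (add_mset \<psi> (image_mset snd P)) {#\<theta>#} \<Longrightarrow>
    add_mset (DiaArr \<phi> \<psi>) (image_mset box_pair P) \<subseteq># \<Gamma> \<Longrightarrow>
    SConstCK_ht (Suc n) \<Gamma> {#DiaArr \<eta> \<theta>#}"
| boxdia: "\<forall>(\<rho>, \<sigma>) \<in># P. SConstCK_equiv \<phi> \<rho> \<Longrightarrow>
    SConstCK_ht n (add_mset \<psi> (image_mset snd P)) {#} \<Longrightarrow> size \<Delta> \<le> 1 \<Longrightarrow>
    add_mset (DiaArr \<phi> \<psi>) (image_mset box_pair P) \<subseteq># \<Gamma> \<Longrightarrow> SConstCK_ht (Suc n) \<Gamma> \<Delta>"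

lemma SConstCK_ht_andL:
  "SConstCK_ht n (add_mset \<phi> (add_mset \<psi> \<Gamma>)) \<Delta> \<Longrightarrow> SConstCK_ht (Suc n) (add_mset (And \<phi> \<psi>) \<Gamma>) \<Delta>"
  by (rule SConstCK_ht.left) auto

lemma SConstCK_ht_orL:
  "SConstCK_ht n (add_mset \<phi> \<Gamma>) \<Delta> \<Longrightarrow> SConstCK_ht n (add_mset \<psi> \<Gamma>) \<Delta> \<Longrightarrow>
    SConstCK_ht (Suc n) (add_mset (Or \<phi> \<psi>) \<Gamma>) \<Delta>"
  by (rule SConstCK_ht.left) auto

lemma SConstCK_ht_impL:
  "SConstCK_ht n (add_mset (Imp \<phi> \<psi>) \<Gamma>) {#\<phi>#} \<Longrightarrow> SConstCK_ht n (add_mset \<psi> \<Gamma>) \<Delta> \<Longrightarrow>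
    SConstCK_ht (Suc n) (add_mset (Imp \<phi> \<psi>) \<Gamma>) \<Delta>"
  by (rule SConstCK_ht.left) auto

lemma SConstCK_ht_add: "SConstCK_ht n \<Gamma> \<Delta> \<Longrightarrow> SConstCK_ht (n + k) \<Gamma> \<Delta>"
  by (induction rule: SConstCK_ht.induct) (auto intro: SConstCK_ht.intros)

lemma SConstCK_ht_mono: "SConstCK_ht n \<Gamma> \<Delta> \<Longrightarrow> n \<le> m \<Longrightarrow> SConstCK_ht m \<Gamma> \<Delta>"
  by (metis SConstCK_ht_add le_Suc_ex)

lemma SConstCK_imp_SConstCK_ht: "SConstCK \<Gamma> \<Delta> \<Longrightarrow> \<exists>n. SConstCK_ht n \<Gamma> \<Delta>"
proof (induction rule: SConstCK.induct)
  case (andR \<Gamma> \<phi> \<psi>)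
  then obtain n m where "SConstCK_ht n \<Gamma> {#\<phi>#}" "SConstCK_ht m \<Gamma> {#\<psi>#}" by blast
  then show ?case by (meson SConstCK_ht.andR SConstCK_ht_mono max.cobounded1 max.cobounded2)
next
  case (orL \<phi> \<Gamma> \<Delta> \<psi>)
  then obtain n m where "SConstCK_ht n (add_mset \<phi> \<Gamma>) \<Delta>" "SConstCK_ht m (add_mset \<psi> \<Gamma>) \<Delta>" by blast
  then show ?case by (meson SConstCK_ht_orL SConstCK_ht_mono max.cobounded1 max.cobounded2)
next
  case (impL \<phi> \<psi> \<Gamma> \<Delta>)
  then obtain n m where "SConstCK_ht n (add_mset (Imp \<phi> \<psi>) \<Gamma>) {#\<phi>#}" "SConstCK_ht m (add_mset \<psi> \<Gamma>) \<Delta>"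
    by blast
  then show ?case by (meson SConstCK_ht_impL SConstCK_ht_mono max.cobounded1 max.cobounded2)
next
  case (box ps \<phi> \<psi> \<Gamma>)
  have "\<forall>(\<rho>, \<sigma>) \<in># mset ps. SConstCK_equiv \<phi> \<rho>"
    using box by (auto simp: SConstCK_equiv_def)
  moreover obtain n where "SConstCK_ht n (image_mset snd (mset ps)) {#\<psi>#}"
    using box by auto
  ultimately have "SConstCK_ht (Suc n) (\<Gamma> + image_mset box_pair (mset ps)) {#BoxArr \<phi> \<psi>#}"
    by (rule SConstCK_ht.box[OF _ _ mset_subset_eq_add_right])
  then show ?case by auto
next
  case (dia ps \<phi> \<eta> \<psi> \<theta> \<Gamma>)
  have "\<forall>(\<rho>, \<sigma>) \<in># mset ps. SConstCK_equiv \<phi> \<rho>" "SConstCK_equiv \<phi> \<eta>"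
    using dia by (auto simp: SConstCK_equiv_def)
  moreover obtain n where "SConstCK_ht n (add_mset \<psi> (image_mset snd (mset ps))) {#\<theta>#}"
    using dia by auto
  ultimately have "SConstCK_ht (Suc n) (\<Gamma> + add_mset (DiaArr \<phi> \<psi>) (image_mset box_pair (mset ps)))
    {#DiaArr \<eta> \<theta>#}"
    by (rule SConstCK_ht.dia[OF _ _ _ mset_subset_eq_add_right])
  then show ?case by auto
next
  case (boxdia ps \<phi> \<psi> \<Delta> \<Gamma>)
  have "\<forall>(\<rho>, \<sigma>) \<in># mset ps. SConstCK_equiv \<phi> \<rho>"
    using boxdia by (auto simp: SConstCK_equiv_def)
  moreover obtain n where "SConstCK_ht n (add_mset \<psi> (image_mset snd (mset ps))) {#}"
    using boxdia by auto
  moreover have "size \<Delta> \<le> 1"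
    using boxdia by simp
  ultimately have "SConstCK_ht (Suc n) (\<Gamma> + add_mset (DiaArr \<phi> \<psi>) (image_mset box_pair (mset ps))) \<Delta>"
    by (rule SConstCK_ht.boxdia[OF _ _ _ mset_subset_eq_add_right])
  then show ?case by auto
qed (blast intro: SConstCK_ht.init SConstCK_ht.botL SConstCK_ht_andL SConstCK_ht.andR
    SConstCK_ht.orR1 SConstCK_ht.orR2 SConstCK_ht.impR)+

lemma SConstCK_ht_imp_SConstCK: "SConstCK_ht n \<Gamma> \<Delta> \<Longrightarrow> SConstCK \<Gamma> \<Delta>"
proof (induction rule: SConstCK_ht.induct)
  case (left Z n \<Gamma> \<Delta>)
  show ?case
  proof (cases Z)
    case (And \<phi> \<psi>)
    with left.IH(1)[of "{#\<phi>, \<psi>#}"] show ?thesis by (auto intro: SConstCK.andL)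
  next
    case (Or \<phi> \<psi>)
    with left.IH(1)[of "{#\<phi>#}"] left.IH(1)[of "{#\<psi>#}"] show ?thesis by (auto intro: SConstCK.orL)
  next
    case (Imp \<phi> \<psi>)
    with left.IH(1)[of "{#\<psi>#}"] left.IH(2) show ?thesis by (auto intro: SConstCK.impL)
  qed (use left.hyps(1) in auto)
qed (auto intro: SConstCK.intros SConstCK_box_subset SConstCK_dia_subset SConstCK_boxdia_subset)

lemma SConstCK_iff_ht: "SConstCK \<Gamma> \<Delta> \<longleftrightarrow> (\<exists>n. SConstCK_ht n \<Gamma> \<Delta>)"
  using SConstCK_imp_SConstCK_ht SConstCK_ht_imp_SConstCK by blast

lemma SConstCK_ht_size: "SConstCK_ht n \<Gamma> \<Delta> \<Longrightarrow> size \<Delta> \<le> 1"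
  by (induction rule: SConstCK_ht.induct) auto

lemma SConstCK_ht_weaken: "SConstCK_ht n \<Gamma> \<Delta> \<Longrightarrow> SConstCK_ht n (\<Gamma> + \<Theta>) \<Delta>"
proof (induction rule: SConstCK_ht.induct)
  case (left Z n \<Gamma> \<Delta>)
  then show ?case by (auto intro!: SConstCK_ht.left simp: add.assoc)
qed (auto intro: SConstCK_ht.intros(1,2,4-7) subset_mset.add_increasing2
    SConstCK_ht.box[OF _ _ subset_mset.add_increasing2] SConstCK_ht.dia[OF _ _ _ subset_mset.add_increasing2]
    SConstCK_ht.boxdia[OF _ _ _ subset_mset.add_increasing2])

lemma DiaArr_notin_box_pairs [simp]: "DiaArr \<phi> \<psi> \<notin> box_pair ` A"
  by auto

lemma left_inversions_not_modal: "Y \<in> left_inversions X \<Longrightarrow> X \<notin> box_pair ` A \<and> X \<noteq> DiaArr \<phi> \<psi>"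
  by (cases X) auto

lemma SConstCK_ht_left_inversion:
  "SConstCK_ht n \<Gamma>' \<Delta> \<Longrightarrow> \<Gamma>' = add_mset X \<Gamma> \<Longrightarrow> Y \<in> left_inversions X \<Longrightarrow> SConstCK_ht n (Y + \<Gamma>) \<Delta>"
proof (induction arbitrary: \<Gamma> rule: SConstCK_ht.induct)
  case (init n p \<Gamma>0)
  then have "Atom p \<noteq> X" by auto
  with init.prems(1) obtain \<Theta> where "\<Gamma> = add_mset (Atom p) \<Theta>"
    by (auto elim: add_mset_eq_add_mset_neqE)
  then show ?case by (simp add: SConstCK_ht.init)
next
  case (botL \<Delta> n \<Gamma>0)
  then have "Bot \<noteq> X" by auto
  with botL.prems(1) obtain \<Theta> where "\<Gamma> = add_mset Bot \<Theta>"
    by (auto elim: add_mset_eq_add_mset_neqE)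
  with botL.hyps show ?case by (simp add: SConstCK_ht.botL)
next
  case (left Z n \<Gamma>0 \<Delta>)
  show ?case
  proof (cases "Z = X")
    case True
    with left.prems left.hyps(2)[of Y] have "SConstCK_ht n (Y + \<Gamma>) \<Delta>" by simp
    then show ?thesis by (rule SConstCK_ht_mono) simp
  next
    case False
    with left.prems(1) obtain \<Theta> where \<Theta>: "\<Gamma>0 = add_mset X \<Theta>" "\<Gamma> = add_mset Z \<Theta>"
      by (auto elim: add_mset_eq_add_mset_neqE)
    have "SConstCK_ht (Suc n) (add_mset Z (Y + \<Theta>)) \<Delta>"
    proof (rule SConstCK_ht.left)
      show "SConstCK_ht n (Y' + (Y + \<Theta>)) \<Delta>" if "Y' \<in> left_inversions Z" for Y'
        using left.IH(1)[OF that, of "Y' + \<Theta>"] \<Theta> left.prems(2) by (simp add: ac_simps)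
      show "SConstCK_ht n (add_mset Z (Y + \<Theta>)) {#\<phi>#}" if "Z = Imp \<phi> \<psi>" for \<phi> \<psi>
        using left.IH(2)[OF that, of "add_mset Z \<Theta>"] \<Theta> left.prems(2) by (simp add: ac_simps)
    qed (rule left.hyps(1))
    with \<Theta> show ?thesis by simp
  qed
next
  case (impR n \<phi> \<Gamma>0 \<psi>)
  then show ?case using impR.IH[of "add_mset \<phi> \<Gamma>"] by (simp add: SConstCK_ht.impR)
next
  case (box P \<phi> n \<psi> \<Gamma>0)
  then show ?case
    by (auto intro!: SConstCK_ht.box subset_mset.add_increasing
        elim!: subset_add_mset_notin dest: left_inversions_not_modal)
next
  case (dia P \<phi> \<eta> n \<psi> \<theta> \<Gamma>0)
  then show ?case
    by (auto intro!: SConstCK_ht.dia subset_mset.add_increasing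
        elim!: subset_add_mset_notin dest: left_inversions_not_modal)
next
  case (boxdia P \<phi> n \<psi> \<Delta> \<Gamma>0)
  then show ?case
    by (auto intro!: SConstCK_ht.boxdia subset_mset.add_increasing
        elim!: subset_add_mset_notin dest: left_inversions_not_modal)
qed (auto intro: SConstCK_ht.intros(4-6))

lemma image_box_pair_eq_twiceE:
  assumes "image_mset box_pair P = add_mset X (add_mset X M)"
  obtains \<rho> \<sigma> P' where "X = BoxArr \<rho> \<sigma>" "P = add_mset (\<rho>, \<sigma>) (add_mset (\<rho>, \<sigma>) P')"
proof -
  have "X \<in># image_mset box_pair P" using assms by simp
  then obtain \<rho> \<sigma> where X: "X = BoxArr \<rho> \<sigma>" and "(\<rho>, \<sigma>) \<in># P" by auto
  then obtain P1 where P1: "P = add_mset (\<rho>, \<sigma>) P1" by (metis multi_member_split)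
  with assms X have "BoxArr \<rho> \<sigma> \<in># image_mset box_pair P1" by simp
  then have "(\<rho>, \<sigma>) \<in># P1" by auto
  then obtain P' where "P1 = add_mset (\<rho>, \<sigma>) P'" by (metis multi_member_split)
  with X P1 that show ?thesis by blast
qed

text \<open>\<open>M\<close> is the diamond formula of a modal rule, if any: when the active formulas do not fit into
  the contracted antecedent, \<open>X\<close> is a boxed formula listed twice.\<close>
lemma modal_active_twiceE:
  assumes "M + image_mset box_pair P \<subseteq># add_mset X (add_mset X \<Gamma>)"
    and "size M \<le> 1" "set_mset M \<inter> box_pair ` UNIV = {}"
  obtains "M + image_mset box_pair P \<subseteq># add_mset X \<Gamma>"
  | \<rho> \<sigma> P' where "X = BoxArr \<rho> \<sigma>" "P = add_mset (\<rho>, \<sigma>) (add_mset (\<rho>, \<sigma>) P')"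
      "M + image_mset box_pair (add_mset (\<rho>, \<sigma>) P') \<subseteq># add_mset X \<Gamma>"
proof (cases "M + image_mset box_pair P \<subseteq># add_mset X \<Gamma>")
  case False
  with assms(1) obtain K where K: "M + image_mset box_pair P = add_mset X (add_mset X K)" "K \<subseteq># \<Gamma>"
    by (rule subset_add_mset_twiceE)
  obtain K' where K': "image_mset box_pair P = add_mset X (add_mset X K')" "K = M + K'"
  proof (cases M)
    case (add D M')
    with assms(2,3) have M: "M = {#D#}" "D \<notin> box_pair ` UNIV" by (auto dest!: size_eq_0_iff_empty[THEN iffD1])
    have "D \<noteq> X"
    proof
      assume "D = X"
      with K(1) M have "X \<in># image_mset box_pair P" by (simp add: add_eq_conv_ex)
      with M \<open>D = X\<close> show False by auto
    qed
    with K(1) M obtain K'' where "image_mset box_pair P = add_mset X (add_mset X K'')"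
      "K = add_mset D K''"
      by (auto elim: add_mset_eq_add_mset_twiceE)
    with M that[of K''] show ?thesis by simp
  qed (use K(1) that in simp)
  from K'(1) obtain \<rho> \<sigma> P' where "X = BoxArr \<rho> \<sigma>" "P = add_mset (\<rho>, \<sigma>) (add_mset (\<rho>, \<sigma>) P')"
    by (rule image_box_pair_eq_twiceE)
  moreover from this K K' have "M + image_mset box_pair (add_mset (\<rho>, \<sigma>) P') \<subseteq># add_mset X \<Gamma>"
    by simp
  ultimately show ?thesis by (rule that(2))
qed (rule that(1))

lemma modal_rule_contractE:
  assumes "M + image_mset box_pair P \<subseteq># add_mset X (add_mset X \<Gamma>)"
    and "size M \<le> 1" "set_mset M \<inter> box_pair ` UNIV = {}"
    and "SConstCK_ht m (N + image_mset snd P) \<Delta>"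
    and "\<And>\<sigma> \<Theta>. SConstCK_ht m (add_mset \<sigma> (add_mset \<sigma> \<Theta>)) \<Delta> \<Longrightarrow> SConstCK_ht m (add_mset \<sigma> \<Theta>) \<Delta>"
  obtains P' where "set_mset P' \<subseteq> set_mset P" "SConstCK_ht m (N + image_mset snd P') \<Delta>"
    "M + image_mset box_pair P' \<subseteq># add_mset X \<Gamma>"
  using assms(1-3)
proof (cases rule: modal_active_twiceE)
  case 1
  with assms(4) show ?thesis by (intro that) simp_all
next
  case (2 \<rho> \<sigma> P')
  with assms(4) assms(5)[of \<sigma> "N + image_mset snd P'"] show ?thesis
    by (intro that[of "add_mset (\<rho>, \<sigma>) P'"]) (auto simp: ac_simps)
qed

lemma SConstCK_ht_left_contract:
  fixes Z :: "'a fm"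
  assumes contract: "\<And>(X :: 'a fm) \<Gamma> \<Delta>.
      SConstCK_ht m (add_mset X (add_mset X \<Gamma>)) \<Delta> \<Longrightarrow> SConstCK_ht m (add_mset X \<Gamma>) \<Delta>"
    and eq: "add_mset Z \<Gamma>0 = add_mset X (add_mset X \<Gamma>)" and "left_inversions Z \<noteq> {}"
    and prems: "\<And>Y. Y \<in> left_inversions Z \<Longrightarrow> SConstCK_ht m (Y + \<Gamma>0) \<Delta>"
    and imp_prem: "\<And>\<phi> \<psi>. Z = Imp \<phi> \<psi> \<Longrightarrow> SConstCK_ht m (add_mset Z \<Gamma>0) {#\<phi>#}"
  shows "SConstCK_ht (Suc m) (add_mset X \<Gamma>) \<Delta>"
proof (cases "Z = X")
  case True
  have contract_mset: "SConstCK_ht m (Y + (Y + \<Theta>)) \<Delta> \<Longrightarrow> SConstCK_ht m (Y + \<Theta>) \<Delta>"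
    for Y \<Theta> :: "'a fm multiset"
  proof (induction Y arbitrary: \<Theta>)
    case (add y Y)
    then show ?case using contract[of y "Y + (Y + \<Theta>)"] add.IH[of "add_mset y \<Theta>"] by simp
  qed simp
  from True eq have \<Gamma>0: "\<Gamma>0 = add_mset X \<Gamma>" by simp
  show ?thesis
  proof (rule SConstCK_ht.left[of X, unfolded True])
    fix Y assume "Y \<in> left_inversions X"
    with prems[of Y] True \<Gamma>0 have "SConstCK_ht m (Y + (Y + \<Gamma>)) \<Delta>"
      by (auto intro: SConstCK_ht_left_inversion)
    then show "SConstCK_ht m (Y + \<Gamma>) \<Delta>" by (rule contract_mset)
  next
    show "SConstCK_ht m (add_mset X \<Gamma>) {#\<phi>#}" if "X = Imp \<phi> \<psi>" for \<phi> \<psi>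
      using imp_prem[of \<phi> \<psi>] contract[of X \<Gamma>] that True \<Gamma>0 by simp
  qed (use assms(3) True in simp)
next
  case False
  with eq obtain \<Theta> where \<Theta>: "\<Gamma>0 = add_mset X (add_mset X \<Theta>)" "\<Gamma> = add_mset Z \<Theta>"
    by (auto elim: add_mset_eq_add_mset_twiceE)
  have "SConstCK_ht (Suc m) (add_mset Z (add_mset X \<Theta>)) \<Delta>"
  proof (rule SConstCK_ht.left)
    show "SConstCK_ht m (Y + add_mset X \<Theta>) \<Delta>" if "Y \<in> left_inversions Z" for Y
      using prems[OF that] contract[of X "Y + \<Theta>"] \<Theta> by simp
    show "SConstCK_ht m (add_mset Z (add_mset X \<Theta>)) {#\<phi>#}" if "Z = Imp \<phi> \<psi>" for \<phi> \<psi>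
      using imp_prem[OF that] contract[of X "add_mset Z \<Theta>"] \<Theta> by (simp add: add_mset_commute)
  qed (rule assms(3))
  with \<Theta> show ?thesis by (simp add: add_mset_commute)
qed

lemma SConstCK_ht_contract:
  "SConstCK_ht n (add_mset X (add_mset X \<Gamma>)) \<Delta> \<Longrightarrow> SConstCK_ht n (add_mset X \<Gamma>) \<Delta>"
proof (induction n arbitrary: X \<Gamma> \<Delta> rule: less_induct)
  case (less n)
  from less.prems show ?case
  proof cases
    case (init p \<Gamma>0)
    then show ?thesis
      by (metis SConstCK_ht.init add_mset_eq_add_mset_twiceE insert_noteq_member mset_add)
  next
    case (botL \<Gamma>0)
    then show ?thesis
      by (metis SConstCK_ht.botL add_mset_eq_add_mset_twiceE insert_noteq_member mset_add)
  next
    case (left Z m \<Gamma>0)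
    then have "m < n" by simp
    from SConstCK_ht_left_contract[OF less.IH[OF this] left(2)[symmetric] left(3-5)] left(1)
    show ?thesis by simp
  next
    case (andR m \<phi> \<psi>)
    with less.IH[of m X \<Gamma>] show ?thesis by (simp add: SConstCK_ht.andR)
  next
    case (orR1 m \<phi> \<psi>)
    with less.IH[of m X \<Gamma>] show ?thesis by (simp add: SConstCK_ht.orR1)
  next
    case (orR2 m \<psi> \<phi>)
    with less.IH[of m X \<Gamma>] show ?thesis by (simp add: SConstCK_ht.orR2)
  next
    case (impR m \<phi> \<psi>)
    with less.IH[of m X "add_mset \<phi> \<Gamma>"] show ?thesis by (simp add: add_mset_commute SConstCK_ht.impR)
  next
    case (box P \<phi> m \<psi>)
    obtain P' where "set_mset P' \<subseteq> set_mset P" "SConstCK_ht m ({#} + image_mset snd P') {#\<psi>#}"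
      "{#} + image_mset box_pair P' \<subseteq># add_mset X \<Gamma>"
      by (rule modal_rule_contractE[of "{#}" P X \<Gamma> m "{#}"]) (use box less.IH in auto)
    with box show ?thesis by (auto intro: SConstCK_ht.box)
  next
    case (dia P \<phi> \<eta> m \<psi> \<theta>)
    obtain P' where "set_mset P' \<subseteq> set_mset P"
      "SConstCK_ht m ({#\<psi>#} + image_mset snd P') {#\<theta>#}"
      "{#DiaArr \<phi> \<psi>#} + image_mset box_pair P' \<subseteq># add_mset X \<Gamma>"
      by (rule modal_rule_contractE[of "{#DiaArr \<phi> \<psi>#}" P X \<Gamma> m "{#\<psi>#}"]) (use dia less.IH in auto)
    with dia show ?thesis by (auto intro: SConstCK_ht.dia)
  next
    case (boxdia P \<phi> m \<psi>)
    obtain P' where "set_mset P' \<subseteq> set_mset P" "SConstCK_ht m ({#\<psi>#} + image_mset snd P') {#}"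
      "{#DiaArr \<phi> \<psi>#} + image_mset box_pair P' \<subseteq># add_mset X \<Gamma>"
      by (rule modal_rule_contractE[of "{#DiaArr \<phi> \<psi>#}" P X \<Gamma> m "{#\<psi>#}"])
        (use boxdia less.IH in auto)
    with boxdia show ?thesis
      unfolding boxdia(1) by (intro SConstCK_ht.boxdia[of P' \<phi> m \<psi>]) auto
  qed
qed

section \<open>Admissible structural rules\<close>

lemma SConstCK_size: "SConstCK \<Gamma> \<Delta> \<Longrightarrow> size \<Delta> \<le> 1"
  using SConstCK_ht_size by (auto simp: SConstCK_iff_ht)

lemma SConstCK_weaken: "SConstCK \<Gamma> \<Delta> \<Longrightarrow> \<Gamma> \<subseteq># \<Gamma>' \<Longrightarrow> SConstCK \<Gamma>' \<Delta>"
  by (metis SConstCK_iff_ht SConstCK_ht_weaken subset_mset.add_diff_inverse)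

lemma SConstCK_contract: "SConstCK (add_mset \<phi> (add_mset \<phi> \<Gamma>)) \<Delta> \<Longrightarrow> SConstCK (add_mset \<phi> \<Gamma>) \<Delta>"
  by (meson SConstCK_iff_ht SConstCK_ht_contract)

lemma SConstCK_contract_set: "SConstCK (\<Gamma> + \<Theta>) \<Delta> \<Longrightarrow> set_mset \<Theta> \<subseteq> set_mset \<Gamma> \<Longrightarrow> SConstCK \<Gamma> \<Delta>"
proof (induction \<Theta> arbitrary: \<Gamma>)
  case (add \<phi> \<Theta>)
  then obtain \<Gamma>' where \<Gamma>: "\<Gamma> = add_mset \<phi> \<Gamma>'" by (metis insert_subset multi_member_split set_mset_add_mset_insert)
  with add.prems(1) have "SConstCK (add_mset \<phi> (add_mset \<phi> (\<Gamma>' + \<Theta>))) \<Delta>" by simp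
  then have "SConstCK (\<Gamma> + \<Theta>) \<Delta>" unfolding \<Gamma> by (auto dest: SConstCK_contract)
  with add show ?case by simp
qed simp

lemma SConstCK_left_inversion:
  "SConstCK (add_mset X \<Gamma>) \<Delta> \<Longrightarrow> Y \<in> left_inversions X \<Longrightarrow> SConstCK (Y + \<Gamma>) \<Delta>"
  using SConstCK_ht_left_inversion by (metis SConstCK_iff_ht)

lemma SConstCK_left:
  assumes "left_inversions Z \<noteq> {}" "\<And>Y. Y \<in> left_inversions Z \<Longrightarrow> SConstCK (Y + \<Gamma>) \<Delta>"
    and "\<And>\<phi> \<psi>. Z = Imp \<phi> \<psi> \<Longrightarrow> SConstCK (add_mset Z \<Gamma>) {#\<phi>#}"
  shows "SConstCK (add_mset Z \<Gamma>) \<Delta>"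
proof (cases Z)
  case (And \<phi> \<psi>)
  with assms(2)[of "{#\<phi>, \<psi>#}"] show ?thesis by (auto intro: SConstCK.andL)
next
  case (Or \<phi> \<psi>)
  with assms(2)[of "{#\<phi>#}"] assms(2)[of "{#\<psi>#}"] show ?thesis by (auto intro: SConstCK.orL)
next
  case (Imp \<phi> \<psi>)
  with assms(2)[of "{#\<psi>#}"] assms(3) show ?thesis by (auto intro: SConstCK.impL)
qed (use assms(1) in auto)

lemma SConstCK_box_set:
  assumes "\<forall>(\<rho>, \<sigma>) \<in># P. SConstCK_equiv \<phi> \<rho>" "SConstCK (image_mset snd P) {#\<psi>#}"
    and "box_pair ` set_mset P \<subseteq> set_mset \<Gamma>"
  shows "SConstCK \<Gamma> {#BoxArr \<phi> \<psi>#}"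
proof -
  have "SConstCK (\<Gamma> + image_mset box_pair P) {#BoxArr \<phi> \<psi>#}"
    by (rule SConstCK_box_subset[OF assms(1,2) mset_subset_eq_add_right])
  then show ?thesis by (rule SConstCK_contract_set) (use assms(3) in simp)
qed

lemma SConstCK_dia_set:
  assumes "\<forall>(\<rho>, \<sigma>) \<in># P. SConstCK_equiv \<phi> \<rho>" "SConstCK_equiv \<phi> \<eta>"
    and "SConstCK (add_mset \<psi> (image_mset snd P)) {#\<theta>#}"
    and "DiaArr \<phi> \<psi> \<in># \<Gamma>" "box_pair ` set_mset P \<subseteq> set_mset \<Gamma>"
  shows "SConstCK \<Gamma> {#DiaArr \<eta> \<theta>#}"
proof -
  have "SConstCK (\<Gamma> + add_mset (DiaArr \<phi> \<psi>) (image_mset box_pair P)) {#DiaArr \<eta> \<theta>#}"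
    by (rule SConstCK_dia_subset[OF assms(1-3) mset_subset_eq_add_right])
  then show ?thesis by (rule SConstCK_contract_set) (use assms(4,5) in simp)
qed

lemma SConstCK_boxdia_set:
  assumes "\<forall>(\<rho>, \<sigma>) \<in># P. SConstCK_equiv \<phi> \<rho>" "SConstCK (add_mset \<psi> (image_mset snd P)) {#}"
    and "size \<Delta> \<le> 1" "DiaArr \<phi> \<psi> \<in># \<Gamma>" "box_pair ` set_mset P \<subseteq> set_mset \<Gamma>"
  shows "SConstCK \<Gamma> \<Delta>"
proof -
  have "SConstCK (\<Gamma> + add_mset (DiaArr \<phi> \<psi>) (image_mset box_pair P)) \<Delta>"
    by (rule SConstCK_boxdia_subset[OF assms(1-3) mset_subset_eq_add_right])
  then show ?thesis by (rule SConstCK_contract_set) (use assms(4,5) in simp)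
qed

lemma SConstCK_id: "SConstCK (add_mset \<phi> \<Gamma>) {#\<phi>#}"
proof (induction \<phi> arbitrary: \<Gamma>)
  case (Atom p)
  then show ?case by (rule SConstCK.init)
next
  case Bot
  then show ?case by (simp add: SConstCK.botL)
next
  case (And \<phi> \<psi>)
  then have "SConstCK (add_mset \<phi> (add_mset \<psi> \<Gamma>)) {#\<phi>#}" "SConstCK (add_mset \<phi> (add_mset \<psi> \<Gamma>)) {#\<psi>#}"
    by (metis add_mset_commute)+
  then show ?case by (intro SConstCK.andL SConstCK.andR)
next
  case (Or \<phi> \<psi>)
  then show ?case by (intro SConstCK.orL SConstCK.orR1 SConstCK.orR2)
next
  case (Imp \<phi> \<psi>)
  then have "SConstCK (add_mset (Imp \<phi> \<psi>) (add_mset \<phi> \<Gamma>)) {#\<psi>#}"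
    by (metis SConstCK.impL add_mset_commute)
  then show ?case by (intro SConstCK.impR) (simp add: add_mset_commute)
next
  case (BoxArr \<phi> \<psi>)
  then have "SConstCK_equiv \<phi> \<phi>" "SConstCK {#\<psi>#} {#\<psi>#}"
    by (simp_all add: SConstCK_equiv_def)
  then show ?case by (intro SConstCK_box_subset[of "{#(\<phi>, \<psi>)#}"]) simp_all
next
  case (DiaArr \<phi> \<psi>)
  then have "SConstCK_equiv \<phi> \<phi>" "SConstCK {#\<psi>#} {#\<psi>#}"
    by (simp_all add: SConstCK_equiv_def)
  then show ?case by (intro SConstCK_dia_subset[of "{#}" \<phi> \<phi> \<psi> \<psi>]) simp_all
qed

lemma SConstCK_id_mem: "\<phi> \<in># \<Gamma> \<Longrightarrow> SConstCK \<Gamma> {#\<phi>#}"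
  by (metis SConstCK_id mset_add)

section \<open>Cut admissibility\<close>

definition cut_admissible :: "'a fm \<Rightarrow> bool" where
  "cut_admissible A \<longleftrightarrow> (\<forall>\<Gamma> \<Delta>. SConstCK \<Gamma> {#A#} \<longrightarrow> SConstCK (add_mset A \<Gamma>) \<Delta> \<longrightarrow> SConstCK \<Gamma> \<Delta>)"

lemma cut_admissibleD:
  assumes "cut_admissible A" "SConstCK \<Gamma> {#A#}" "SConstCK (add_mset A \<Gamma>') \<Delta>"
  shows "SConstCK (\<Gamma> + \<Gamma>') \<Delta>"
proof -
  have "SConstCK (\<Gamma> + \<Gamma>') {#A#}" "SConstCK (add_mset A (\<Gamma> + \<Gamma>')) \<Delta>"
    using assms(2,3) by (auto elim!: SConstCK_weaken)
  with assms(1) show ?thesis unfolding cut_admissible_def by blast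
qed

lemma SConstCK_equiv_trans:
  "cut_admissible \<psi> \<Longrightarrow> SConstCK_equiv \<phi> \<psi> \<Longrightarrow> SConstCK_equiv \<psi> \<chi> \<Longrightarrow> SConstCK_equiv \<phi> \<chi>"
  using cut_admissibleD[of \<psi> "{#\<phi>#}" "{#}" "{#\<chi>#}"] cut_admissibleD[of \<psi> "{#\<chi>#}" "{#}" "{#\<phi>#}"]
  by (simp add: SConstCK_equiv_def)

text \<open>Commutes a cut on \<open>A\<close> up the derivation of the right premise. \<open>Q\<close> is the information
  kept about the left premise; the \<open>_active\<close> hypotheses treat the rules in which \<open>A\<close> is
  principal.\<close>
lemma cut_right_commute:
  fixes Q :: "'a fm multiset \<Rightarrow> bool"
  assumes "SConstCK_ht n \<Gamma>' \<Delta>" "\<Gamma>' = add_mset A \<Gamma>" "Q \<Gamma>"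
    and shape: "\<exists>\<phi> \<psi>. A = Imp \<phi> \<psi> \<or> A = BoxArr \<phi> \<psi> \<or> A = DiaArr \<phi> \<psi>"
    and Q_weaken: "\<And>\<phi> \<Gamma>. Q \<Gamma> \<Longrightarrow> Q (add_mset \<phi> \<Gamma>)"
    and Q_invert: "\<And>X Y \<Gamma>. Q (add_mset X \<Gamma>) \<Longrightarrow> Y \<in> left_inversions X \<Longrightarrow> Q (Y + \<Gamma>)"
    and impL_active: "\<And>\<phi> \<psi> \<Gamma> \<Delta>. A = Imp \<phi> \<psi> \<Longrightarrow> Q \<Gamma> \<Longrightarrow>
      SConstCK \<Gamma> {#\<phi>#} \<Longrightarrow> SConstCK (add_mset \<psi> \<Gamma>) \<Delta> \<Longrightarrow> SConstCK \<Gamma> \<Delta>"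
    and box_active: "\<And>\<phi> \<psi> P \<Gamma>. Q \<Gamma> \<Longrightarrow> \<forall>(\<rho>, \<sigma>) \<in># P. SConstCK_equiv \<phi> \<rho> \<Longrightarrow>
      SConstCK (image_mset snd P) {#\<psi>#} \<Longrightarrow>
      A \<in># image_mset box_pair P \<Longrightarrow> image_mset box_pair P \<subseteq># add_mset A \<Gamma> \<Longrightarrow>
      SConstCK \<Gamma> {#BoxArr \<phi> \<psi>#}"
    and dia_active: "\<And>\<phi> \<eta> \<psi> \<theta> P \<Gamma>. Q \<Gamma> \<Longrightarrow> \<forall>(\<rho>, \<sigma>) \<in># P. SConstCK_equiv \<phi> \<rho> \<Longrightarrow>
      SConstCK_equiv \<phi> \<eta> \<Longrightarrow> SConstCK (add_mset \<psi> (image_mset snd P)) {#\<theta>#} \<Longrightarrow>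
      A \<in># add_mset (DiaArr \<phi> \<psi>) (image_mset box_pair P) \<Longrightarrow>
      add_mset (DiaArr \<phi> \<psi>) (image_mset box_pair P) \<subseteq># add_mset A \<Gamma> \<Longrightarrow>
      SConstCK \<Gamma> {#DiaArr \<eta> \<theta>#}"
    and boxdia_active: "\<And>\<phi> \<psi> \<Delta> P \<Gamma>. Q \<Gamma> \<Longrightarrow> \<forall>(\<rho>, \<sigma>) \<in># P. SConstCK_equiv \<phi> \<rho> \<Longrightarrow>
      SConstCK (add_mset \<psi> (image_mset snd P)) {#} \<Longrightarrow> size \<Delta> \<le> 1 \<Longrightarrow>
      A \<in># add_mset (DiaArr \<phi> \<psi>) (image_mset box_pair P) \<Longrightarrow>
      add_mset (DiaArr \<phi> \<psi>) (image_mset box_pair P) \<subseteq># add_mset A \<Gamma> \<Longrightarrow> SConstCK \<Gamma> \<Delta>"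
  shows "SConstCK \<Gamma> \<Delta>"
  using assms(1-3)
proof (induction arbitrary: \<Gamma> rule: SConstCK_ht.induct)
  case (init n p \<Gamma>0)
  with shape have "Atom p \<in># \<Gamma>" by (auto simp: add_eq_conv_ex)
  then show ?case by (rule SConstCK_id_mem)
next
  case (botL \<Delta> n \<Gamma>0)
  with shape have "Bot \<in># \<Gamma>" by (auto simp: add_eq_conv_ex)
  with botL.hyps show ?case by (metis SConstCK.botL mset_add)
next
  case (left Z n \<Gamma>0 \<Delta>)
  show ?case
  proof (cases "Z = A")
    case True
    with shape left.hyps(1) obtain \<phi> \<psi> where A: "A = Imp \<phi> \<psi>" by auto
    with True left.prems(1) have "\<Gamma>0 = \<Gamma>" by simp
    with A True left.prems(2) left.IH(2)[of \<phi> \<psi> \<Gamma>] SConstCK_ht_imp_SConstCK[OF left.hyps(2)[of "{#\<psi>#}"]]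
    show ?thesis by (auto intro: impL_active)
  next
    case False
    with left.prems(1) obtain \<Theta> where \<Theta>: "\<Gamma>0 = add_mset A \<Theta>" "\<Gamma> = add_mset Z \<Theta>"
      by (auto elim: add_mset_eq_add_mset_neqE)
    show ?thesis unfolding \<Theta>(2)
    proof (rule SConstCK_left)
      show "SConstCK (Y + \<Theta>) \<Delta>" if "Y \<in> left_inversions Z" for Y
        using left.IH(1)[OF that, of "Y + \<Theta>"] Q_invert[OF _ that, of \<Theta>] left.prems(2) \<Theta> by simp
      show "SConstCK (add_mset Z \<Theta>) {#\<phi>#}" if "Z = Imp \<phi> \<psi>" for \<phi> \<psi>
        using left.IH(2)[OF that, of "add_mset Z \<Theta>"] left.prems(2) \<Theta> by (simp add: add_mset_commute)
    qed (rule left.hyps(1))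
  qed
next
  case (impR n \<phi> \<Gamma>0 \<psi>)
  with Q_weaken impR.IH[of "add_mset \<phi> \<Gamma>"] show ?case by (simp add: add_mset_commute SConstCK.impR)
next
  case (box P \<phi> n \<psi> \<Gamma>0)
  show ?case
  proof (cases "A \<in># image_mset box_pair P")
    case True
    from True box.hyps(3)[unfolded box.prems(1)] show ?thesis
      by (rule box_active[OF box.prems(2) box.hyps(1) SConstCK_ht_imp_SConstCK[OF box.hyps(2)]])
  next
    case False
    with box.hyps(1) SConstCK_ht_imp_SConstCK[OF box.hyps(2)] show ?thesis
      by (rule SConstCK_box_subset[OF _ _ subset_add_mset_notin[OF box.hyps(3)[unfolded box.prems(1)]]])
  qed
next
  case (dia P \<phi> \<eta> n \<psi> \<theta> \<Gamma>0)
  show ?case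
  proof (cases "A \<in># add_mset (DiaArr \<phi> \<psi>) (image_mset box_pair P)")
    case True
    from True dia.hyps(4)[unfolded dia.prems(1)] show ?thesis
      by (rule dia_active[OF dia.prems(2) dia.hyps(1,2) SConstCK_ht_imp_SConstCK[OF dia.hyps(3)]])
  next
    case False
    with dia.hyps(1,2) SConstCK_ht_imp_SConstCK[OF dia.hyps(3)] show ?thesis
      by (rule SConstCK_dia_subset[OF _ _ _ subset_add_mset_notin[OF dia.hyps(4)[unfolded dia.prems(1)]]])
  qed
next
  case (boxdia P \<phi> n \<psi> \<Delta> \<Gamma>0)
  show ?case
  proof (cases "A \<in># add_mset (DiaArr \<phi> \<psi>) (image_mset box_pair P)")
    case True
    from True boxdia.hyps(4)[unfolded boxdia.prems(1)] show ?thesis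
      by (rule boxdia_active[OF boxdia.prems(2) boxdia.hyps(1) SConstCK_ht_imp_SConstCK[OF boxdia.hyps(2)]
            boxdia.hyps(3)])
  next
    case False
    with boxdia.hyps(1) SConstCK_ht_imp_SConstCK[OF boxdia.hyps(2)] boxdia.hyps(3) show ?thesis
      by (rule SConstCK_boxdia_subset[OF _ _ _
            subset_add_mset_notin[OF boxdia.hyps(4)[unfolded boxdia.prems(1)]]])
  qed
qed (auto intro: SConstCK.andR SConstCK.orR1 SConstCK.orR2)

lemma cut_imp_principal:
  assumes "cut_admissible \<phi>" "cut_admissible \<psi>"
    and "SConstCK (add_mset (Imp \<phi> \<psi>) \<Gamma>) \<Delta>" "SConstCK (add_mset \<phi> \<Gamma>) {#\<psi>#}"
  shows "SConstCK \<Gamma> \<Delta>"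
proof -
  from assms(3) obtain n where "SConstCK_ht n (add_mset (Imp \<phi> \<psi>) \<Gamma>) \<Delta>"
    by (auto simp: SConstCK_iff_ht)
  then show ?thesis
  proof (rule cut_right_commute[where Q = "\<lambda>\<Gamma>. SConstCK (add_mset \<phi> \<Gamma>) {#\<psi>#}", OF _ refl assms(4)])
    show "SConstCK (add_mset \<phi> (add_mset \<chi> \<Gamma>)) {#\<psi>#}" if "SConstCK (add_mset \<phi> \<Gamma>) {#\<psi>#}" for \<chi> \<Gamma>
      using that by (rule SConstCK_weaken) simp
    show "SConstCK (add_mset \<phi> (Y + \<Gamma>)) {#\<psi>#}"
      if "SConstCK (add_mset \<phi> (add_mset X \<Gamma>)) {#\<psi>#}" "Y \<in> left_inversions X" for X Y \<Gamma>
      using SConstCK_left_inversion[of X "add_mset \<phi> \<Gamma>"] that by (simp add: add_mset_commute)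
    show "SConstCK \<Gamma> \<Delta>"
      if "Imp \<phi> \<psi> = Imp \<phi>' \<psi>'" "SConstCK (add_mset \<phi> \<Gamma>) {#\<psi>#}"
        "SConstCK \<Gamma> {#\<phi>'#}" "SConstCK (add_mset \<psi>' \<Gamma>) \<Delta>" for \<phi>' \<psi>' \<Gamma> \<Delta>
      using that assms(1,2) unfolding cut_admissible_def by blast
  qed auto
qed

text \<open>What a derivation of \<open>\<Gamma> \<Rightarrow> \<phi> \<box>\<rightarrow> \<psi>\<close> (resp. \<open>\<Gamma> \<Rightarrow> \<eta> \<diamond>\<rightarrow> \<theta>\<close>) ending in a
  modal rule provides, in a form preserved by weakening and left inversion of \<open>\<Gamma>\<close>.\<close>
definition box_rule_applies :: "'a fm multiset \<Rightarrow> 'a fm \<Rightarrow> 'a fm \<Rightarrow> bool" where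
  "box_rule_applies \<Gamma> \<phi> \<psi> \<longleftrightarrow> (\<exists>P. (\<forall>(\<rho>, \<sigma>) \<in># P. SConstCK_equiv \<phi> \<rho>) \<and>
     SConstCK (image_mset snd P) {#\<psi>#} \<and> box_pair ` set_mset P \<subseteq> set_mset \<Gamma>)"

definition dia_rule_applies :: "'a fm multiset \<Rightarrow> 'a fm \<Rightarrow> 'a fm \<Rightarrow> bool" where
  "dia_rule_applies \<Gamma> \<eta> \<theta> \<longleftrightarrow> (\<exists>\<phi> \<psi> P. (\<forall>(\<rho>, \<sigma>) \<in># P. SConstCK_equiv \<phi> \<rho>) \<and> SConstCK_equiv \<phi> \<eta> \<and>
     SConstCK (add_mset \<psi> (image_mset snd P)) {#\<theta>#} \<and>
     DiaArr \<phi> \<psi> \<in># \<Gamma> \<and> box_pair ` set_mset P \<subseteq> set_mset \<Gamma>)"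

lemma box_rule_applies_mono:
  assumes "box_rule_applies \<Gamma> \<phi> \<psi>" "set_mset \<Gamma> \<subseteq> set_mset \<Gamma>'"
  shows "box_rule_applies \<Gamma>' \<phi> \<psi>"
proof -
  from assms(1) obtain P where "\<forall>(\<rho>, \<sigma>) \<in># P. SConstCK_equiv \<phi> \<rho>"
    "SConstCK (image_mset snd P) {#\<psi>#}" "box_pair ` set_mset P \<subseteq> set_mset \<Gamma>"
    unfolding box_rule_applies_def by blast
  with assms(2) show ?thesis
    unfolding box_rule_applies_def by - (rule exI[of _ P], auto)
qed

lemma dia_rule_applies_mono:
  assumes "dia_rule_applies \<Gamma> \<eta> \<theta>" "set_mset \<Gamma> \<subseteq> set_mset \<Gamma>'"
  shows "dia_rule_applies \<Gamma>' \<eta> \<theta>"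
proof -
  from assms(1) obtain \<phi> \<psi> P where "\<forall>(\<rho>, \<sigma>) \<in># P. SConstCK_equiv \<phi> \<rho>" "SConstCK_equiv \<phi> \<eta>"
    "SConstCK (add_mset \<psi> (image_mset snd P)) {#\<theta>#}"
    "DiaArr \<phi> \<psi> \<in># \<Gamma>" "box_pair ` set_mset P \<subseteq> set_mset \<Gamma>"
    unfolding dia_rule_applies_def by blast
  with assms(2) show ?thesis
    unfolding dia_rule_applies_def by - (rule exI[of _ \<phi>], rule exI[of _ \<psi>], rule exI[of _ P], auto)
qed

lemma box_rule_applies_left_inversion:
  assumes "box_rule_applies (add_mset X \<Gamma>) \<phi> \<psi>" "Y \<in> left_inversions X"
  shows "box_rule_applies (Y + \<Gamma>) \<phi> \<psi>"
proof -
  from assms(1) obtain P where "\<forall>(\<rho>, \<sigma>) \<in># P. SConstCK_equiv \<phi> \<rho>"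
    "SConstCK (image_mset snd P) {#\<psi>#}" "box_pair ` set_mset P \<subseteq> set_mset (add_mset X \<Gamma>)"
    unfolding box_rule_applies_def by blast
  moreover from assms(2) have "X \<notin> box_pair ` set_mset P" by (cases X) auto
  ultimately show ?thesis unfolding box_rule_applies_def by - (rule exI[of _ P], auto)
qed

lemma dia_rule_applies_left_inversion:
  assumes "dia_rule_applies (add_mset X \<Gamma>) \<eta> \<theta>" "Y \<in> left_inversions X"
  shows "dia_rule_applies (Y + \<Gamma>) \<eta> \<theta>"
proof -
  from assms(1) obtain \<phi> \<psi> P where "\<forall>(\<rho>, \<sigma>) \<in># P. SConstCK_equiv \<phi> \<rho>" "SConstCK_equiv \<phi> \<eta>"
    "SConstCK (add_mset \<psi> (image_mset snd P)) {#\<theta>#}"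
    "DiaArr \<phi> \<psi> \<in># add_mset X \<Gamma>" "box_pair ` set_mset P \<subseteq> set_mset (add_mset X \<Gamma>)"
    unfolding dia_rule_applies_def by blast
  moreover from assms(2) have "X \<notin> box_pair ` set_mset P" "X \<noteq> DiaArr \<phi> \<psi>" by (cases X; auto)+
  ultimately show ?thesis unfolding dia_rule_applies_def by - (rule exI[of _ \<phi>], rule exI[of _ \<psi>], rule exI[of _ P], auto)
qed

lemma box_rule_applies_active:
  assumes "cut_admissible \<phi>" "cut_admissible \<psi>" "box_rule_applies \<Gamma> \<phi> \<psi>"
    and "BoxArr \<phi> \<psi> \<in># image_mset box_pair P" "image_mset box_pair P \<subseteq># add_mset (BoxArr \<phi> \<psi>) \<Gamma>"
    and "\<forall>(\<rho>, \<sigma>) \<in># P. SConstCK_equiv \<chi> \<rho>" "SConstCK (\<Theta> + image_mset snd P) \<Delta>"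
  shows "\<exists>P'. (\<forall>(\<rho>, \<sigma>) \<in># P'. SConstCK_equiv \<chi> \<rho>) \<and> SConstCK (\<Theta> + image_mset snd P') \<Delta> \<and>
    box_pair ` set_mset P' \<subseteq> set_mset \<Gamma>"
proof -
  from assms(4) have "(\<phi>, \<psi>) \<in># P" by auto
  then obtain P1 where P1: "P = add_mset (\<phi>, \<psi>) P1" by (metis multi_member_split)
  with assms(5) have "image_mset box_pair P1 \<subseteq># \<Gamma>" by simp
  then have "box_pair ` set_mset P1 \<subseteq> set_mset \<Gamma>" by (metis set_image_mset set_mset_mono)
  moreover from assms(3) obtain Q where Q: "\<forall>(\<rho>, \<sigma>) \<in># Q. SConstCK_equiv \<phi> \<rho>"
    "SConstCK (image_mset snd Q) {#\<psi>#}" "box_pair ` set_mset Q \<subseteq> set_mset \<Gamma>"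
    unfolding box_rule_applies_def by blast
  moreover have "\<forall>(\<rho>, \<sigma>) \<in># Q + P1. SConstCK_equiv \<chi> \<rho>"
    using Q(1) assms(6) P1 SConstCK_equiv_trans[OF assms(1)] by auto
  moreover have "SConstCK (\<Theta> + image_mset snd (Q + P1)) \<Delta>"
    using cut_admissibleD[OF assms(2) Q(2), of "\<Theta> + image_mset snd P1"] assms(7) P1
    by (simp add: ac_simps)
  ultimately show ?thesis by (intro exI[of _ "Q + P1"]) auto
qed

lemma cut_box_principal:
  assumes "cut_admissible \<phi>" "cut_admissible \<psi>"
    and "SConstCK (add_mset (BoxArr \<phi> \<psi>) \<Gamma>) \<Delta>" "box_rule_applies \<Gamma> \<phi> \<psi>"
  shows "SConstCK \<Gamma> \<Delta>"
proof -
  from assms(3) obtain n where "SConstCK_ht n (add_mset (BoxArr \<phi> \<psi>) \<Gamma>) \<Delta>"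
    by (auto simp: SConstCK_iff_ht)
  then show ?thesis
  proof (rule cut_right_commute[where Q = "\<lambda>\<Gamma>. box_rule_applies \<Gamma> \<phi> \<psi>", OF _ refl assms(4)])
    show "box_rule_applies (add_mset \<chi> \<Gamma>) \<phi> \<psi>" if "box_rule_applies \<Gamma> \<phi> \<psi>" for \<chi> \<Gamma>
      using that by (rule box_rule_applies_mono) auto
    show "SConstCK \<Gamma> {#BoxArr \<chi> \<psi>'#}"
      if \<Gamma>: "box_rule_applies \<Gamma> \<phi> \<psi>" and "\<forall>(\<rho>, \<sigma>) \<in># P. SConstCK_equiv \<chi> \<rho>"
        "SConstCK (image_mset snd P) {#\<psi>'#}" "BoxArr \<phi> \<psi> \<in># image_mset box_pair P"
        "image_mset box_pair P \<subseteq># add_mset (BoxArr \<phi> \<psi>) \<Gamma>"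
      for \<chi> \<psi>' P \<Gamma>
    proof -
      from box_rule_applies_active[OF assms(1,2) \<Gamma> that(4,5,2), where \<Theta> = "{#}" and \<Delta> = "{#\<psi>'#}"]
        that(3)
      obtain P' where "\<forall>(\<rho>, \<sigma>) \<in># P'. SConstCK_equiv \<chi> \<rho>" "SConstCK (image_mset snd P') {#\<psi>'#}"
        "box_pair ` set_mset P' \<subseteq> set_mset \<Gamma>"
        by auto
      then show ?thesis by (rule SConstCK_box_set)
    qed
    show "SConstCK \<Gamma> {#DiaArr \<eta> \<theta>#}"
      if \<Gamma>: "box_rule_applies \<Gamma> \<phi> \<psi>" and "\<forall>(\<rho>, \<sigma>) \<in># P. SConstCK_equiv \<chi> \<rho>"
        "SConstCK_equiv \<chi> \<eta>" "SConstCK (add_mset \<psi>' (image_mset snd P)) {#\<theta>#}"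
        "BoxArr \<phi> \<psi> \<in># add_mset (DiaArr \<chi> \<psi>') (image_mset box_pair P)"
        "add_mset (DiaArr \<chi> \<psi>') (image_mset box_pair P) \<subseteq># add_mset (BoxArr \<phi> \<psi>) \<Gamma>"
      for \<chi> \<eta> \<psi>' \<theta> P \<Gamma>
    proof -
      from that(6) have D: "DiaArr \<chi> \<psi>' \<in># \<Gamma>"
        and sub: "image_mset box_pair P \<subseteq># add_mset (BoxArr \<phi> \<psi>) \<Gamma>"
        by (auto dest: mset_subset_eq_insertD)
      from that(5) have "BoxArr \<phi> \<psi> \<in># image_mset box_pair P" by simp
      from box_rule_applies_active[OF assms(1,2) \<Gamma> this sub that(2), where \<Theta> = "{#\<psi>'#}" and \<Delta> = "{#\<theta>#}"]
        that(4)
      obtain P' where "\<forall>(\<rho>, \<sigma>) \<in># P'. SConstCK_equiv \<chi> \<rho>"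
        "SConstCK (add_mset \<psi>' (image_mset snd P')) {#\<theta>#}" "box_pair ` set_mset P' \<subseteq> set_mset \<Gamma>"
        by auto
      with that(3) D show ?thesis by (auto intro: SConstCK_dia_set)
    qed
    show "SConstCK \<Gamma> \<Delta>"
      if \<Gamma>: "box_rule_applies \<Gamma> \<phi> \<psi>" and "\<forall>(\<rho>, \<sigma>) \<in># P. SConstCK_equiv \<chi> \<rho>"
        "SConstCK (add_mset \<psi>' (image_mset snd P)) {#}" "size \<Delta> \<le> 1"
        "BoxArr \<phi> \<psi> \<in># add_mset (DiaArr \<chi> \<psi>') (image_mset box_pair P)"
        "add_mset (DiaArr \<chi> \<psi>') (image_mset box_pair P) \<subseteq># add_mset (BoxArr \<phi> \<psi>) \<Gamma>"
      for \<chi> \<psi>' P \<Gamma> and \<Delta> :: "'a fm multiset"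
    proof -
      from that(6) have D: "DiaArr \<chi> \<psi>' \<in># \<Gamma>"
        and sub: "image_mset box_pair P \<subseteq># add_mset (BoxArr \<phi> \<psi>) \<Gamma>"
        by (auto dest: mset_subset_eq_insertD)
      from that(5) have "BoxArr \<phi> \<psi> \<in># image_mset box_pair P" by simp
      from box_rule_applies_active[OF assms(1,2) \<Gamma> this sub that(2), where \<Theta> = "{#\<psi>'#}" and \<Delta> = "{#}"]
        that(3)
      obtain P' where "\<forall>(\<rho>, \<sigma>) \<in># P'. SConstCK_equiv \<chi> \<rho>"
        "SConstCK (add_mset \<psi>' (image_mset snd P')) {#}" "box_pair ` set_mset P' \<subseteq> set_mset \<Gamma>"
        by auto
      with that(4) D show ?thesis by (auto intro: SConstCK_boxdia_set)
    qed
  qed (simp_all add: box_rule_applies_left_inversion)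
qed

lemma dia_rule_applies_active:
  assumes "cut_admissible \<eta>" "cut_admissible \<theta>" "dia_rule_applies \<Gamma> \<eta> \<theta>"
    and "DiaArr \<eta> \<theta> \<in># add_mset (DiaArr \<chi> \<psi>) (image_mset box_pair P)"
    and "add_mset (DiaArr \<chi> \<psi>) (image_mset box_pair P) \<subseteq># add_mset (DiaArr \<eta> \<theta>) \<Gamma>"
    and "\<forall>(\<rho>, \<sigma>) \<in># P. SConstCK_equiv \<chi> \<rho>" "SConstCK (add_mset \<psi> (image_mset snd P)) \<Delta>"
  shows "\<exists>\<phi> \<psi>' P'. (\<forall>(\<rho>, \<sigma>) \<in># P'. SConstCK_equiv \<phi> \<rho>) \<and> SConstCK_equiv \<phi> \<chi> \<and>
    SConstCK (add_mset \<psi>' (image_mset snd P')) \<Delta> \<and> DiaArr \<phi> \<psi>' \<in># \<Gamma> \<and>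
    box_pair ` set_mset P' \<subseteq> set_mset \<Gamma>"
proof -
  from assms(4) have \<chi>\<psi>: "\<chi> = \<eta>" "\<psi> = \<theta>" by auto
  with assms(5) have "image_mset box_pair P \<subseteq># \<Gamma>" by simp
  then have P: "box_pair ` set_mset P \<subseteq> set_mset \<Gamma>" by (metis set_image_mset set_mset_mono)
  from assms(3) obtain \<phi> \<psi>' Q where Q: "\<forall>(\<rho>, \<sigma>) \<in># Q. SConstCK_equiv \<phi> \<rho>" "SConstCK_equiv \<phi> \<eta>"
    "SConstCK (add_mset \<psi>' (image_mset snd Q)) {#\<theta>#}" "DiaArr \<phi> \<psi>' \<in># \<Gamma>"
    "box_pair ` set_mset Q \<subseteq> set_mset \<Gamma>"
    unfolding dia_rule_applies_def by blast
  have "\<forall>(\<rho>, \<sigma>) \<in># Q + P. SConstCK_equiv \<phi> \<rho>"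
    using Q(1,2) assms(6) \<chi>\<psi> SConstCK_equiv_trans[OF assms(1)] by auto
  moreover have "SConstCK (add_mset \<psi>' (image_mset snd (Q + P))) \<Delta>"
    using cut_admissibleD[OF assms(2) Q(3)] assms(7) \<chi>\<psi> by simp
  moreover have "box_pair ` set_mset (Q + P) \<subseteq> set_mset \<Gamma>"
    using Q(5) P by auto
  ultimately show ?thesis using Q(2,4) \<chi>\<psi> by blast
qed

lemma cut_dia_principal:
  assumes "cut_admissible \<eta>" "cut_admissible \<theta>"
    and "SConstCK (add_mset (DiaArr \<eta> \<theta>) \<Gamma>) \<Delta>" "dia_rule_applies \<Gamma> \<eta> \<theta>"
  shows "SConstCK \<Gamma> \<Delta>"
proof -
  from assms(3) obtain n where "SConstCK_ht n (add_mset (DiaArr \<eta> \<theta>) \<Gamma>) \<Delta>"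
    by (auto simp: SConstCK_iff_ht)
  then show ?thesis
  proof (rule cut_right_commute[where Q = "\<lambda>\<Gamma>. dia_rule_applies \<Gamma> \<eta> \<theta>", OF _ refl assms(4)])
    show "dia_rule_applies (add_mset \<chi> \<Gamma>) \<eta> \<theta>" if "dia_rule_applies \<Gamma> \<eta> \<theta>" for \<chi> \<Gamma>
      using that by (rule dia_rule_applies_mono) auto
    show "SConstCK \<Gamma> {#DiaArr \<eta>' \<theta>'#}"
      if \<Gamma>: "dia_rule_applies \<Gamma> \<eta> \<theta>" and "\<forall>(\<rho>, \<sigma>) \<in># P. SConstCK_equiv \<chi> \<rho>"
        "SConstCK_equiv \<chi> \<eta>'" "SConstCK (add_mset \<psi> (image_mset snd P)) {#\<theta>'#}"
        "DiaArr \<eta> \<theta> \<in># add_mset (DiaArr \<chi> \<psi>) (image_mset box_pair P)"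
        "add_mset (DiaArr \<chi> \<psi>) (image_mset box_pair P) \<subseteq># add_mset (DiaArr \<eta> \<theta>) \<Gamma>"
      for \<chi> \<eta>' \<psi> \<theta>' P \<Gamma>
    proof -
      from that(5) have "\<chi> = \<eta>" by auto
      with that(3) have "SConstCK_equiv \<phi> \<eta>'" if "SConstCK_equiv \<phi> \<chi>" for \<phi>
        using SConstCK_equiv_trans[OF assms(1), of \<phi> \<eta>'] that by simp
      with dia_rule_applies_active[OF assms(1,2) \<Gamma> that(5,6,2,4)] show ?thesis
        by (auto intro: SConstCK_dia_set)
    qed
    show "SConstCK \<Gamma> \<Delta>"
      if \<Gamma>: "dia_rule_applies \<Gamma> \<eta> \<theta>" and "\<forall>(\<rho>, \<sigma>) \<in># P. SConstCK_equiv \<chi> \<rho>"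
        "SConstCK (add_mset \<psi> (image_mset snd P)) {#}" "size \<Delta> \<le> 1"
        "DiaArr \<eta> \<theta> \<in># add_mset (DiaArr \<chi> \<psi>) (image_mset box_pair P)"
        "add_mset (DiaArr \<chi> \<psi>) (image_mset box_pair P) \<subseteq># add_mset (DiaArr \<eta> \<theta>) \<Gamma>"
      for \<chi> \<psi> P \<Gamma> and \<Delta> :: "'a fm multiset"
      using dia_rule_applies_active[OF assms(1,2) \<Gamma> that(5,6,2,3)] that(4)
      by (auto intro: SConstCK_boxdia_set)
  qed (simp_all add: dia_rule_applies_left_inversion)
qed

lemma cut_left_invertible_principal:
  assumes "Y \<in> left_inversions A" "SConstCK (add_mset A \<Gamma>) \<Delta>"
    and "\<And>\<phi>. \<phi> \<in># Y \<Longrightarrow> cut_admissible \<phi> \<and> SConstCK \<Gamma> {#\<phi>#}"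
  shows "SConstCK \<Gamma> \<Delta>"
proof -
  have "SConstCK \<Gamma> \<Delta>" if "SConstCK (Y' + \<Gamma>) \<Delta>" "\<forall>\<phi> \<in># Y'. cut_admissible \<phi> \<and> SConstCK \<Gamma> {#\<phi>#}"
    for Y'
    using that
  proof (induction Y')
    case (add \<phi> Y')
    then have "cut_admissible \<phi>" "SConstCK (Y' + \<Gamma>) {#\<phi>#}"
      using SConstCK_weaken[of \<Gamma> "{#\<phi>#}" "Y' + \<Gamma>"] by auto
    with add.prems(1) have "SConstCK (Y' + \<Gamma>) \<Delta>"
      unfolding cut_admissible_def by simp
    with add show ?case by simp
  qed simp
  with SConstCK_left_inversion[OF assms(2,1)] assms(3) show ?thesis by blast
qed

lemma cut_admissible_step:
  assumes smaller: "\<And>B :: 'a fm. size B < size A \<Longrightarrow> cut_admissible B"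
  shows "cut_admissible (A :: 'a fm)"
  unfolding cut_admissible_def
proof (intro allI impI)
  fix \<Gamma> \<Delta>
  assume "SConstCK \<Gamma> {#A#}" and right: "SConstCK (add_mset A \<Gamma>) \<Delta>"
  then obtain n where "SConstCK_ht n \<Gamma> {#A#}" by (auto simp: SConstCK_iff_ht)
  then show "SConstCK \<Gamma> \<Delta>" using right
  proof (induction n \<Gamma> "{#A#}" arbitrary: \<Delta> rule: SConstCK_ht.induct)
    case (init n p \<Gamma>)
    then show ?case by (simp add: SConstCK_contract)
  next
    case (botL n \<Gamma>)
    from SConstCK_size[OF botL.prems] show ?case by (rule SConstCK.botL)
  next
    case (left Z n \<Gamma>)
    show ?case
    proof (rule SConstCK_left)
      show "SConstCK (Y + \<Gamma>) \<Delta>" if "Y \<in> left_inversions Z" for Y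
        using SConstCK_left_inversion[of Z "add_mset A \<Gamma>" \<Delta> Y] left.prems that
        by (intro left(3)[OF that]) (simp_all add: add_mset_commute)
      show "SConstCK (add_mset Z \<Gamma>) {#\<phi>#}" if "Z = Imp \<phi> \<psi>" for \<phi> \<psi>
        using left(4)[OF that] by (rule SConstCK_ht_imp_SConstCK)
    qed (rule left.hyps(1))
  next
    case (andR n \<Gamma> \<phi> \<psi>)
    then have A: "A = And \<phi> \<psi>" by simp
    show ?case
    proof (rule cut_left_invertible_principal[OF _ andR.prems])
      show "cut_admissible \<chi> \<and> SConstCK \<Gamma> {#\<chi>#}" if "\<chi> \<in># {#\<phi>, \<psi>#}" for \<chi>
        using that smaller[of \<chi>] andR(1,3) A by (auto intro: SConstCK_ht_imp_SConstCK)
    qed (simp add: A)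
  next
    case (orR1 n \<Gamma> \<phi> \<psi>)
    then have A: "A = Or \<phi> \<psi>" by simp
    show ?case
    proof (rule cut_left_invertible_principal[OF _ orR1.prems])
      show "cut_admissible \<chi> \<and> SConstCK \<Gamma> {#\<chi>#}" if "\<chi> \<in># {#\<phi>#}" for \<chi>
        using that smaller[of \<chi>] orR1(1) A by (auto intro: SConstCK_ht_imp_SConstCK)
    qed (simp add: A)
  next
    case (orR2 n \<Gamma> \<psi> \<phi>)
    then have A: "A = Or \<phi> \<psi>" by simp
    show ?case
    proof (rule cut_left_invertible_principal[OF _ orR2.prems])
      show "cut_admissible \<chi> \<and> SConstCK \<Gamma> {#\<chi>#}" if "\<chi> \<in># {#\<psi>#}" for \<chi>
        using that smaller[of \<chi>] orR2(1) A by (auto intro: SConstCK_ht_imp_SConstCK)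
    qed (simp add: A)
  next
    case (impR n \<phi> \<Gamma> \<psi>)
    then have A: "A = Imp \<phi> \<psi>" by simp
    then have "cut_admissible \<phi>" "cut_admissible \<psi>"
      using smaller[of \<phi>] smaller[of \<psi>] by simp_all
    from this impR.prems[unfolded A] SConstCK_ht_imp_SConstCK[OF impR(1)] show ?case
      by (rule cut_imp_principal)
  next
    case (box P \<phi> n \<psi> \<Gamma>)
    then have A: "A = BoxArr \<phi> \<psi>" by simp
    have "box_rule_applies \<Gamma> \<phi> \<psi>"
      unfolding box_rule_applies_def using box set_mset_mono[OF box(4)]
      by (auto intro!: exI[of _ P] SConstCK_ht_imp_SConstCK)
    moreover have "cut_admissible \<phi>" "cut_admissible \<psi>"
      using smaller[of \<phi>] smaller[of \<psi>] A by simp_all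
    ultimately show ?case
      using cut_box_principal box.prems[unfolded A] by blast
  next
    case (dia P \<phi> \<eta> n \<psi> \<theta> \<Gamma>)
    then have A: "A = DiaArr \<eta> \<theta>" by simp
    have "dia_rule_applies \<Gamma> \<eta> \<theta>"
      unfolding dia_rule_applies_def using dia set_mset_mono[OF dia(5)]
      by - (rule exI[of _ \<phi>], rule exI[of _ \<psi>], rule exI[of _ P], auto intro: SConstCK_ht_imp_SConstCK)
    moreover have "cut_admissible \<eta>" "cut_admissible \<theta>"
      using smaller[of \<eta>] smaller[of \<theta>] A by simp_all
    ultimately show ?case
      using cut_dia_principal dia.prems[unfolded A] by blast
  next
    case (boxdia P \<phi> n \<psi> \<Gamma>)
    with SConstCK_size[OF boxdia.prems] show ?case
      by (auto intro: SConstCK_boxdia_subset SConstCK_ht_imp_SConstCK)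
  qed
qed

lemma cut_admissible_all: "cut_admissible A"
  by (induction A rule: measure_induct_rule[of size]) (rule cut_admissible_step)

lemma SConstCK_cut: "SConstCK \<Gamma> {#A#} \<Longrightarrow> SConstCK (add_mset A \<Gamma>) \<Delta> \<Longrightarrow> SConstCK \<Gamma> \<Delta>"
  using cut_admissible_all unfolding cut_admissible_def by blast

section \<open>Completeness\<close>

lemma SConstCK_impL_mem:
  assumes "Imp \<phi> \<psi> \<in># \<Gamma>" "SConstCK \<Gamma> {#\<phi>#}" "SConstCK (add_mset \<psi> \<Gamma>) \<Delta>"
  shows "SConstCK \<Gamma> \<Delta>"
proof -
  from assms(1) obtain \<Gamma>' where \<Gamma>: "\<Gamma> = add_mset (Imp \<phi> \<psi>) \<Gamma>'"
    by (metis multi_member_split)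
  have "SConstCK (add_mset (Imp \<phi> \<psi>) \<Gamma>) {#\<phi>#}"
    using assms(2) by (rule SConstCK_weaken) simp
  then have "SConstCK (add_mset (Imp \<phi> \<psi>) \<Gamma>) \<Delta>"
    using assms(3) by (rule SConstCK.impL)
  then show ?thesis unfolding \<Gamma> by (rule SConstCK_contract)
qed

lemma SConstCK_equiv_refl: "SConstCK_equiv \<phi> \<phi>"
  using SConstCK_id[of \<phi> "{#}"] by (simp add: SConstCK_equiv_def)

lemma SConstCK_Iff_iff: "SConstCK {#} {#Iff \<phi> \<psi>#} \<longleftrightarrow> SConstCK_equiv \<phi> \<psi>"
proof
  assume Iff: "SConstCK {#} {#Iff \<phi> \<psi>#}"
  have "SConstCK {#Imp \<phi> \<psi>, Imp \<psi> \<phi>, \<phi>#} {#\<psi>#}"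
    by (rule SConstCK_impL_mem[of \<phi> \<psi>]) (simp_all add: SConstCK_id_mem)
  then have "SConstCK (add_mset (Iff \<phi> \<psi>) {#\<phi>#}) {#\<psi>#}"
    unfolding Iff_def by (rule SConstCK.andL)
  moreover have "SConstCK {#Imp \<phi> \<psi>, Imp \<psi> \<phi>, \<psi>#} {#\<phi>#}"
    by (rule SConstCK_impL_mem[of \<psi> \<phi>]) (simp_all add: SConstCK_id_mem)
  then have "SConstCK (add_mset (Iff \<phi> \<psi>) {#\<psi>#}) {#\<phi>#}"
    unfolding Iff_def by (rule SConstCK.andL)
  moreover have "SConstCK {#\<chi>#} {#Iff \<phi> \<psi>#}" for \<chi>
    using Iff by (rule SConstCK_weaken) simp
  ultimately show "SConstCK_equiv \<phi> \<psi>"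
    unfolding SConstCK_equiv_def by (metis SConstCK_cut)
next
  assume "SConstCK_equiv \<phi> \<psi>"
  then show "SConstCK {#} {#Iff \<phi> \<psi>#}"
    unfolding Iff_def SConstCK_equiv_def by (intro SConstCK.andR SConstCK.impR) simp_all
qed

lemma SConstCK_Iff_refl: "SConstCK {#} {#Iff \<phi> \<phi>#}"
  by (simp add: SConstCK_Iff_iff SConstCK_equiv_refl)

lemma SConstCK_Iff_box_cong:
  assumes "SConstCK {#} {#Iff \<phi> \<rho>#}" "SConstCK {#} {#Iff \<psi> \<chi>#}"
  shows "SConstCK {#} {#Iff (BoxArr \<phi> \<psi>) (BoxArr \<rho> \<chi>)#}"
proof -
  have box: "SConstCK {#BoxArr \<alpha> \<beta>#} {#BoxArr \<gamma> \<delta>#}"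
    if "SConstCK_equiv \<alpha> \<gamma>" "SConstCK {#\<beta>#} {#\<delta>#}" for \<alpha> \<beta> \<gamma> \<delta> :: "'a fm"
    using that by (intro SConstCK_box_subset[of "{#(\<alpha>, \<beta>)#}"]) (auto simp: SConstCK_equiv_def)
  from assms show ?thesis
    by (auto simp: SConstCK_Iff_iff SConstCK_equiv_def intro!: box)
qed

lemma SConstCK_Iff_dia_cong:
  assumes "SConstCK {#} {#Iff \<phi> \<rho>#}" "SConstCK {#} {#Iff \<psi> \<chi>#}"
  shows "SConstCK {#} {#Iff (DiaArr \<phi> \<psi>) (DiaArr \<rho> \<chi>)#}"
proof -
  have dia: "SConstCK {#DiaArr \<alpha> \<beta>#} {#DiaArr \<gamma> \<delta>#}"
    if "SConstCK_equiv \<alpha> \<gamma>" "SConstCK {#\<beta>#} {#\<delta>#}" for \<alpha> \<beta> \<gamma> \<delta> :: "'a fm"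
    using that by (intro SConstCK_dia_subset[of "{#}" \<alpha> \<gamma> \<beta> \<delta>]) simp_all
  from assms show ?thesis
    by (auto simp: SConstCK_Iff_iff SConstCK_equiv_def intro!: dia)
qed

lemma SConstCK_complete: "ConstCK \<phi> \<Longrightarrow> SConstCK {#} {#\<phi>#}"
proof (induction rule: ConstCK.induct)
  case (A2 \<phi> \<psi> \<chi>)
  have "SConstCK {#\<phi>, Imp \<phi> \<psi>, Imp \<phi> (Imp \<psi> \<chi>)#} {#\<chi>#}"
    by (rule SConstCK_impL_mem[of \<phi> \<psi>], simp, rule SConstCK_id_mem, simp,
        rule SConstCK_impL_mem[of \<phi> "Imp \<psi> \<chi>"], simp, rule SConstCK_id_mem, simp,
        rule SConstCK_impL_mem[of \<psi> \<chi>], simp, rule SConstCK_id_mem, simp,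
        rule SConstCK_id_mem, simp)
  then show ?case by (intro SConstCK.impR) (simp add: add_mset_commute)
next
  case (A8 \<phi> \<chi> \<psi>)
  have "SConstCK (add_mset \<phi> {#Imp \<psi> \<chi>, Imp \<phi> \<chi>#}) {#\<chi>#}"
    by (rule SConstCK_impL_mem[of \<phi> \<chi>]) (simp_all add: SConstCK_id_mem)
  moreover have "SConstCK (add_mset \<psi> {#Imp \<psi> \<chi>, Imp \<phi> \<chi>#}) {#\<chi>#}"
    by (rule SConstCK_impL_mem[of \<psi> \<chi>]) (simp_all add: SConstCK_id_mem)
  ultimately have "SConstCK (add_mset (Or \<phi> \<psi>) {#Imp \<psi> \<chi>, Imp \<phi> \<chi>#}) {#\<chi>#}"
    by (rule SConstCK.orL)
  then show ?case by (intro SConstCK.impR) (simp add: add_mset_commute)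
next
  case (MP \<phi> \<psi>)
  have "SConstCK {#Imp \<phi> \<psi>#} {#\<phi>#}"
    using MP.IH(2) by (rule SConstCK_weaken) simp
  with SConstCK_impL_mem[of \<phi> \<psi> "{#Imp \<phi> \<psi>#}" "{#\<psi>#}"] have "SConstCK {#Imp \<phi> \<psi>#} {#\<psi>#}"
    by (simp add: SConstCK_id_mem)
  then show ?case by (rule SConstCK_cut[OF MP.IH(1)])
next
  case (CM_box \<phi> \<psi> \<chi>)
  have "SConstCK {#And \<psi> \<chi>#} {#\<psi>#}" "SConstCK {#And \<psi> \<chi>#} {#\<chi>#}"
    by (auto intro!: SConstCK.andL intro: SConstCK_id_mem)
  then show ?case
    by (auto intro!: SConstCK.impR SConstCK.andR SConstCK_box_subset[of "{#(\<phi>, And \<psi> \<chi>)#}"]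
        simp: SConstCK_equiv_refl)
next
  case (CC_box \<phi> \<psi> \<chi>)
  have "SConstCK {#\<psi>, \<chi>#} {#And \<psi> \<chi>#}"
    by (auto intro!: SConstCK.andR intro: SConstCK_id_mem)
  then have "SConstCK {#BoxArr \<phi> \<psi>, BoxArr \<phi> \<chi>#} {#BoxArr \<phi> (And \<psi> \<chi>)#}"
    by (intro SConstCK_box_subset[of "{#(\<phi>, \<psi>), (\<phi>, \<chi>)#}"]) (simp_all add: SConstCK_equiv_refl)
  then show ?case by (intro SConstCK.impR SConstCK.andL) (simp add: add_mset_commute)
next
  case (CN_box \<phi>)
  have "SConstCK {#} {#Top#}"
    unfolding Top_def Neg_def by (intro SConstCK.impR) (simp add: SConstCK.botL)
  then show ?case by (intro SConstCK_box_subset[of "{#}"]) simp_all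
next
  case (CN_dia \<phi>)
  have "SConstCK {#DiaArr \<phi> Bot#} {#Bot#}"
    by (rule SConstCK_boxdia_subset[of "{#}" \<phi> Bot]) (simp_all add: SConstCK.botL)
  then show ?case unfolding Neg_def by (intro SConstCK.impR) simp
next
  case (CK_dia \<phi> \<psi> \<chi>)
  have "SConstCK {#\<psi>, Imp \<psi> \<chi>#} {#\<chi>#}"
    by (rule SConstCK_impL_mem[of \<psi> \<chi>]) (auto intro: SConstCK_id_mem)
  then have "SConstCK {#DiaArr \<phi> \<psi>, BoxArr \<phi> (Imp \<psi> \<chi>)#} {#DiaArr \<phi> \<chi>#}"
    by (intro SConstCK_dia_subset[of "{#(\<phi>, Imp \<psi> \<chi>)#}" \<phi> \<phi> \<psi>])
      (simp_all add: SConstCK_equiv_refl add_mset_commute)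
  then show ?case by (intro SConstCK.impR) (simp add: add_mset_commute)
next
  case (RA_box \<phi> \<rho> \<psi>)
  from RA_box.IH SConstCK_Iff_refl show ?case by (rule SConstCK_Iff_box_cong)
next
  case (RC_box \<psi> \<chi> \<phi>)
  from SConstCK_Iff_refl RC_box.IH show ?case by (rule SConstCK_Iff_box_cong)
next
  case (RA_dia \<phi> \<rho> \<psi>)
  from RA_dia.IH SConstCK_Iff_refl show ?case by (rule SConstCK_Iff_dia_cong)
next
  case (RC_dia \<psi> \<chi> \<phi>)
  from SConstCK_Iff_refl RC_dia.IH show ?case by (rule SConstCK_Iff_dia_cong)
next
  case (A6 \<phi> \<psi>)
  show ?case by (intro SConstCK.impR SConstCK.orR1) (simp add: SConstCK_id_mem)
next
  case (A7 \<psi> \<phi>)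
  show ?case by (intro SConstCK.impR SConstCK.orR2) (simp add: SConstCK_id_mem)
qed (auto intro!: SConstCK.impR SConstCK.andL SConstCK.andR intro: SConstCK_id_mem SConstCK.botL)

lemma SConstCK_conj_list: "\<psi>s \<noteq> [] \<Longrightarrow> set \<psi>s \<subseteq> set_mset \<Gamma> \<Longrightarrow> SConstCK \<Gamma> {#conj_list \<psi>s#}"
  by (induction \<psi>s rule: conj_list.induct) (auto intro: SConstCK_id_mem SConstCK.andR)

lemma SConstCK_complete_iota:
  assumes "ConstCK (iota xs ys)" "size \<Delta> \<le> 1" "mset xs = \<Gamma>" "mset ys = \<Delta>"
  shows "SConstCK \<Gamma> \<Delta>"
proof -
  have iota: "SConstCK \<Gamma> {#iota xs ys#}"
    using SConstCK_complete[OF assms(1)] by (rule SConstCK_weaken) simp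
  have disj: "SConstCK \<Gamma> {#disj_list ys#}"
  proof (cases "xs = []")
    case True
    with iota show ?thesis by (simp add: iota_def)
  next
    case False
    then have "SConstCK \<Gamma> {#conj_list xs#}"
      by (rule SConstCK_conj_list) (simp add: assms(3)[symmetric])
    then have "SConstCK (add_mset (Imp (conj_list xs) (disj_list ys)) \<Gamma>) {#conj_list xs#}"
      by (rule SConstCK_weaken) simp
    then have "SConstCK (add_mset (Imp (conj_list xs) (disj_list ys)) \<Gamma>) {#disj_list ys#}"
      using SConstCK_id by (rule SConstCK.impL)
    with iota False show ?thesis unfolding iota_def by (simp add: SConstCK_cut)
  qed
  show ?thesis
  proof (cases ys rule: disj_list.cases)
    case 1
    have "SConstCK (add_mset Bot \<Gamma>) \<Delta>" using assms(2) by (rule SConstCK.botL)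
    with disj 1 show ?thesis by (simp add: SConstCK_cut)
  qed (use disj assms(2,4) in auto)
qed

theorem theorem5:
  fixes \<Gamma> \<Delta> :: "'a fm multiset" and xs ys :: "'a fm list"
  assumes "size \<Delta> \<le> 1" and "mset xs = \<Gamma>" and "mset ys = \<Delta>"
  shows "SConstCK \<Gamma> \<Delta> \<longleftrightarrow> ConstCK (iota xs ys)"
  using assms SConstCK_sound_iota SConstCK_complete_iota by blast

end
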